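(* Let $\mathcal{X}$ be a recursively presented metric space. For every $x\in\mathcal{X}$ there is a name $p\in\omega^\omega$ of $x$ such that $x'\equiv_T p'$, where $p'$ is the Turing jump of $p$.
   Context: A recursively presented metric space is a Polish space with compatible complete metric $d$ and a dense sequence $(a_i)$ such that $d(a_i,a_j)<q_r$ and $d(a_i,a_j)\leq q_r$ are recursive relations, $(q_r)$ a fixed recursive enumeration of positive rationals; basic balls $B_{i,r}=\{x:d(x,a_i)<q_r\}$ are coded by $\langle i,r\rangle$. $\mathrm{Nbase}(x)=\{\langle i,r\rangle:x\in B_{i,r}\}$; a name of $x$ is any $p\in\omega^\omega$ whose range is exactly $\mathrm{Nbase}(x)$. The jump of $x$ is $x'=\{e\in\omega:x\in\bigcup_{\langle i,r\rangle\in W_e}B_{i,r}\}$, $W_e$ the $e$-th c.e. subset of $\omega$. *)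

theory Defs
  imports "HOL-Analysis.Analysis" "HOL-Library.Nat_Bijection"
begin

text \<open>Constructors: 0 zero, 1 successor, 2/3 the two projections of the
pairing, 4 pairing of two programs, 5 composition, 6 oracle query,
7 primitive recursion, 8 unbounded minimisation.
comp orc c x y means: program c with oracle orc on input x halts with output y.\<close>

inductive comp :: "(nat \<Rightarrow> nat) \<Rightarrow> nat \<Rightarrow> nat \<Rightarrow> nat \<Rightarrow> bool" for orc where
  c_zero: "c mod 9 = 0 \<Longrightarrow> comp orc c x 0"
| c_succ: "c mod 9 = 1 \<Longrightarrow> comp orc c x (Suc x)"
| c_fst: "c mod 9 = 2 \<Longrightarrow> comp orc c x (fst (prod_decode x))"
| c_snd: "c mod 9 = 3 \<Longrightarrow> comp orc c x (snd (prod_decode x))"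
| c_pair: "c mod 9 = 4 \<Longrightarrow> prod_decode (c div 9) = (f, g) \<Longrightarrow>
     comp orc f x y \<Longrightarrow> comp orc g x z \<Longrightarrow> comp orc c x (prod_encode (y, z))"
| c_comp: "c mod 9 = 5 \<Longrightarrow> prod_decode (c div 9) = (f, g) \<Longrightarrow>
     comp orc g x y \<Longrightarrow> comp orc f y z \<Longrightarrow> comp orc c x z"
| c_oracle: "c mod 9 = 6 \<Longrightarrow> comp orc c x (orc x)"
| c_rec0: "c mod 9 = 7 \<Longrightarrow> prod_decode (c div 9) = (f, g) \<Longrightarrow>
     prod_decode x = (u, 0) \<Longrightarrow> comp orc f u y \<Longrightarrow> comp orc c x y"
| c_recS: "c mod 9 = 7 \<Longrightarrow> prod_decode (c div 9) = (f, g) \<Longrightarrow>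
     prod_decode x = (u, Suc n) \<Longrightarrow> comp orc c (prod_encode (u, n)) z \<Longrightarrow>
     comp orc g (prod_encode (u, prod_encode (n, z))) y \<Longrightarrow> comp orc c x y"
| c_mu: "c mod 9 = 8 \<Longrightarrow> comp orc (c div 9) (prod_encode (x, y)) 0 \<Longrightarrow>
     (\<forall>z<y. \<exists>w. 0 < w \<and> comp orc (c div 9) (prod_encode (x, z)) w) \<Longrightarrow>
     comp orc c x y"

definition chi :: "nat set \<Rightarrow> nat \<Rightarrow> nat" where
  "chi A n = (if n \<in> A then 1 else 0)"

text \<open>Unrelativised computation = computation with the (computable) zero oracle.\<close>
definition recursive_set :: "nat set \<Rightarrow> bool" where
  "recursive_set A \<longleftrightarrow> (\<exists>c. \<forall>n. comp (\<lambda>_. 0) c n (chi A n))"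

definition W :: "nat \<Rightarrow> nat set" where
  "W e = {n. \<exists>y. comp (\<lambda>_. 0) e n y}"

definition turing_le :: "nat set \<Rightarrow> nat set \<Rightarrow> bool" where
  "turing_le A B \<longleftrightarrow> (\<exists>c. \<forall>n. comp (chi B) c n (chi A n))"

definition turing_equiv :: "nat set \<Rightarrow> nat set \<Rightarrow> bool" where
  "turing_equiv A B \<longleftrightarrow> turing_le A B \<and> turing_le B A"

definition fjump :: "(nat \<Rightarrow> nat) \<Rightarrow> nat set" where
  "fjump p = {e. \<exists>y. comp p e e y}"

definition q :: "nat \<Rightarrow> real" where
  "q r = real (fst (prod_decode r) + 1) / real (snd (prod_decode r) + 1)"

definition rec_presented :: "(nat \<Rightarrow> 'a::metric_space) \<Rightarrow> bool" where
  "rec_presented a \<longleftrightarrow> closure (range a) = UNIV \<and>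
     recursive_set {prod_encode (i, prod_encode (j, r)) | i j r. dist (a i) (a j) < q r} \<and>
     recursive_set {prod_encode (i, prod_encode (j, r)) | i j r. dist (a i) (a j) \<le> q r}"

definition ball_code :: "(nat \<Rightarrow> 'a::metric_space) \<Rightarrow> nat \<Rightarrow> 'a set" where
  "ball_code a k = ball (a (fst (prod_decode k))) (q (snd (prod_decode k)))"

definition Nbase :: "(nat \<Rightarrow> 'a::metric_space) \<Rightarrow> 'a \<Rightarrow> nat set" where
  "Nbase a x = {k. x \<in> ball_code a k}"

definition is_name :: "(nat \<Rightarrow> 'a::metric_space) \<Rightarrow> (nat \<Rightarrow> nat) \<Rightarrow> 'a \<Rightarrow> bool" where
  "is_name a p x \<longleftrightarrow> range p = Nbase a x"

definition pjump :: "(nat \<Rightarrow> 'a::metric_space) \<Rightarrow> 'a \<Rightarrow> nat set" where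
  "pjump a x = {e. x \<in> (\<Union>k\<in>W e. ball_code a k)}"

end

theory Submission
  imports Defs
begin

text \<open>
For any name \<open>p\<close> of \<open>x\<close>, \<open>e \<in> x'\<close> iff some value of \<open>p\<close> lies in \<open>W\<^sub>e\<close>, a \<open>\<Sigma>\<^sub>1\<close>
condition in \<open>p\<close>; hence \<open>x' \<le>\<^sub>T p'\<close>.

For the converse, \<open>p\<close> is built by finite extensions with \<open>x'\<close> as oracle.  At stage \<open>e\<close>,
with finite approximation \<open>\<sigma>\<close>, the set of basic balls \<open>B\<close> for which some extension \<open>\<tau>\<close>
of \<open>\<sigma>\<close>, all of whose entries are codes of balls formally containing \<open>B\<close>, makes program
\<open>e\<close> halt on input \<open>e\<close> with oracle \<open>\<tau>\<close> is c.e., uniformly in \<open>\<sigma>\<close> and \<open>e\<close>.  So \<open>x'\<close>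
decides whether \<open>x\<close> lies in one of these balls, i.e. whether \<open>e\<close> can be forced into the
jump by an extension consisting of neighbourhoods of \<open>x\<close>; if so, such an extension is found
by a search that \<open>x'\<close> can check.  Then \<open>e\<close> is appended if it is a neighbourhood code of
\<open>x\<close>, a fixed neighbourhood code \<open>k\<^sub>0\<close> otherwise, so that the limit is a name of \<open>x\<close>, and
\<open>e \<in> p'\<close> iff \<open>e\<close> was forced at stage \<open>e\<close>, which \<open>x'\<close> decides.

Oracle computations are coded by derivations, finite lists of claims each justified by
claims further down the list.  This makes the searches effective and shows that a halting
computation queries only a finite initial segment of its oracle.
\<close>

abbreviation "enc \<equiv> prod_encode"
abbreviation "dec \<equiv> prod_decode"

section \<open>Oracle programs\<close>

lemma comp_deterministic: "comp orc c x y \<Longrightarrow> comp orc c x y' \<Longrightarrow> y' = y"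
proof (induction arbitrary: y' rule: comp.induct)
  case (c_mu c x y)
  note h = c_mu
  from c_mu.prems show ?case
  proof (cases rule: comp.cases)
    case (c_mu)
    show ?thesis
    proof (rule ccontr)
      assume "y' \<noteq> y"
      then consider "y' < y" | "y < y'" by linarith
      then show False
      proof cases
        case 1
        with h(4) obtain w where "0 < w" "\<forall>v. comp orc (c div 9) (prod_encode (x, y')) v \<longrightarrow> v = w"
          by blast
        with c_mu(2) show False by force
      next
        case 2
        with c_mu(3) obtain w where "0 < w" "comp orc (c div 9) (prod_encode (x, y)) w" by blast
        with h(3) show False by force
      qed
    qed
  qed (use h(1) in auto)
next
  case (c_pair c f g x y z)
  from c_pair.prems c_pair.hyps show ?case by (cases rule: comp.cases) (auto dest: c_pair.IH)
next
  case (c_comp c f g x y z)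
  from c_comp.prems c_comp.hyps show ?case by (cases rule: comp.cases) (auto dest: c_comp.IH)
next
  case (c_rec0 c f g x u y)
  from c_rec0.prems c_rec0.hyps show ?case by (cases rule: comp.cases) (auto dest: c_rec0.IH)
next
  case (c_recS c f g x u n z y)
  from c_recS.prems c_recS.hyps show ?case by (cases rule: comp.cases) (auto dest: c_recS.IH)
qed (erule comp.cases; simp)+

named_theorems computes_intros

definition computes :: "(nat \<Rightarrow> nat) \<Rightarrow> nat \<Rightarrow> (nat \<Rightarrow> nat) \<Rightarrow> bool" where
  "computes orc c F \<longleftrightarrow> (\<forall>x. comp orc c x (F x))"

definition "code_zero = (0::nat)"
definition "code_succ = (1::nat)"
definition "code_fst = (2::nat)"
definition "code_snd = (3::nat)"
definition "code_oracle = (6::nat)"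
definition "code_pair f g = 4 + 9 * enc (f, g)"
definition "code_comp f g = 5 + 9 * enc (f, g)"
definition "code_rec f g = 7 + 9 * enc (f, g)"
definition "code_mu (f::nat) = 8 + 9 * f"

lemma computes_cong: "computes orc c F \<Longrightarrow> (\<And>x. F x = G x) \<Longrightarrow> computes orc c G"
  by (simp add: computes_def)

lemma computes_zero [intro, computes_intros]: "computes orc code_zero (\<lambda>x. 0)"
  unfolding computes_def code_zero_def by (simp add: comp.c_zero)
lemma computes_succ [intro, computes_intros]: "computes orc code_succ Suc"
  unfolding computes_def code_succ_def by (simp add: comp.c_succ)
lemma computes_fst [intro, computes_intros]: "computes orc code_fst (\<lambda>x. fst (dec x))"
  unfolding computes_def code_fst_def by (simp add: comp.c_fst)
lemma computes_snd [intro, computes_intros]: "computes orc code_snd (\<lambda>x. snd (dec x))"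
  unfolding computes_def code_snd_def by (simp add: comp.c_snd)
lemma computes_oracle [intro, computes_intros]: "computes orc code_oracle orc"
  unfolding computes_def code_oracle_def by (simp add: comp.c_oracle)
lemma code_constructor_simps [simp]:
  "code_pair f g mod 9 = 4" "code_pair f g div 9 = enc (f, g)"
  "code_comp f g mod 9 = 5" "code_comp f g div 9 = enc (f, g)"
  "code_rec f g mod 9 = 7" "code_rec f g div 9 = enc (f, g)"
  "code_mu h mod 9 = 8" "code_mu h div 9 = h"
  by (simp_all add: code_pair_def code_comp_def code_rec_def code_mu_def)

lemma computes_pair [intro, computes_intros]:
  assumes "computes orc f F" "computes orc g G"
  shows "computes orc (code_pair f g) (\<lambda>x. enc (F x, G x))"
  unfolding computes_def
proof
  fix x show "comp orc (code_pair f g) x (enc (F x, G x))"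
    by (rule comp.c_pair[where f=f and g=g]) (use assms in \<open>simp_all add: computes_def\<close>)
qed

lemma computes_comp [intro, computes_intros]:
  assumes "computes orc f F" "computes orc g G"
  shows "computes orc (code_comp f g) (\<lambda>x. F (G x))"
  unfolding computes_def
proof
  fix x show "comp orc (code_comp f g) x (F (G x))"
    by (rule comp.c_comp[where f=f and g=g and y="G x"]) (use assms in \<open>simp_all add: computes_def\<close>)
qed

fun prim_rec :: "(nat \<Rightarrow> nat) \<Rightarrow> (nat \<Rightarrow> nat) \<Rightarrow> nat \<Rightarrow> nat \<Rightarrow> nat" where
  "prim_rec F G u 0 = F u"
| "prim_rec F G u (Suc n) = G (enc (u, enc (n, prim_rec F G u n)))"

lemma computes_rec [intro, computes_intros]:
  assumes "computes orc f F" "computes orc g G"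
  shows "computes orc (code_rec f g) (\<lambda>x. prim_rec F G (fst (dec x)) (snd (dec x)))"
  unfolding computes_def
proof
  fix x
  obtain u n where x: "dec x = (u, n)" by (cases "dec x")
  have "comp orc (code_rec f g) (enc (u, n)) (prim_rec F G u n)"
  proof (induction n)
    case 0 show ?case
      by (rule comp.c_rec0[where f=f and g=g and u=u]) (use assms in \<open>simp_all add: computes_def\<close>)
  next
    case (Suc n) show ?case
      by (rule comp.c_recS[where f=f and g=g and u=u and n=n])
        (use assms Suc in \<open>auto simp: computes_def\<close>)
  qed
  then show "comp orc (code_rec f g) x (prim_rec F G (fst (dec x)) (snd (dec x)))"
    using x by (metis fst_conv prod_decode_inverse snd_conv)
qed

lemma comp_code_mu_Least:
  assumes "computes orc f F" "\<exists>y. F (enc (x, y)) = 0"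
  shows "comp orc (code_mu f) x (LEAST y. F (enc (x, y)) = 0)"
proof -
  let ?y = "LEAST y. F (enc (x, y)) = 0"
  have 1: "F (enc (x, ?y)) = 0" using assms(2) by (rule LeastI_ex)
  have 2: "\<forall>z<?y. F (enc (x, z)) \<noteq> 0" using not_less_Least by blast
  show ?thesis
  proof (rule comp.c_mu)
    show "comp orc (code_mu f div 9) (enc (x, ?y)) 0" using assms(1) 1
      by (metis code_constructor_simps(8) computes_def)
    show "\<forall>z<?y. \<exists>w>0. comp orc (code_mu f div 9) (enc (x, z)) w"
      using assms(1) 2 unfolding computes_def by auto
  qed simp
qed

lemma comp_code_mu_root:
  assumes "computes orc f F" "comp orc (code_mu f) x y"
  shows "F (enc (x, y)) = 0"
  using assms(2)
proof (cases rule: comp.cases)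
  case c_mu
  then show ?thesis using assms(1) comp_deterministic unfolding computes_def by fastforce
qed auto

lemma computes_mu:
  assumes "computes orc f F" "\<And>x. \<exists>y. F (enc (x, y)) = 0"
  shows "computes orc (code_mu f) (\<lambda>x. LEAST y. F (enc (x, y)) = 0)"
  using comp_code_mu_Least assms unfolding computes_def by blast

lemma computes_unique: "computes orc c F \<Longrightarrow> comp orc c x y \<Longrightarrow> y = F x"
  unfolding computes_def using comp_deterministic by blast

lemma halts_code_mu_iff:
  assumes "computes orc f F"
  shows "(\<exists>r. comp orc (code_mu f) x r) \<longleftrightarrow> (\<exists>t. F (enc (x, t)) = 0)"
  using comp_code_mu_Least[OF assms] comp_code_mu_root[OF assms] by blast

definition "code_id = code_pair code_fst code_snd"
lemma computes_id [computes_intros]: "computes orc code_id (\<lambda>x. x)"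
  unfolding code_id_def by (rule computes_cong, (rule computes_intros)+) simp

fun code_const :: "nat \<Rightarrow> nat" where
  "code_const 0 = code_zero" | "code_const (Suc k) = code_comp code_succ (code_const k)"
lemma computes_const [computes_intros]: "computes orc (code_const k) (\<lambda>x. k)"
proof (induction k)
  case (Suc k)
  show ?case unfolding code_const.simps by (rule computes_cong[OF computes_comp[OF computes_succ Suc]]) simp
qed (simp add: computes_zero)

definition "code_ap2 h f g = code_comp h (code_pair f g)"
lemma computes_ap2 [computes_intros]: "computes orc h H \<Longrightarrow> computes orc f F \<Longrightarrow> computes orc g G \<Longrightarrow>
   computes orc (code_ap2 h f g) (\<lambda>x. H (enc (F x, G x)))"
  unfolding code_ap2_def by (rule computes_cong, (rule computes_intros | assumption)+, simp)

text \<open>The step function of \<open>code_rec\<close> receives \<open>enc (u, enc (n, z))\<close>, with \<open>z\<close> the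
  value at \<open>n\<close>; these two programs extract \<open>n\<close> and \<open>z\<close>.\<close>

definition "code_rec_count = code_comp code_fst code_snd"
definition "code_rec_prev = code_comp code_snd code_snd"

definition "code_add = code_rec code_id (code_comp code_succ code_rec_prev)"
lemma prim_rec_add: "prim_rec (\<lambda>x. x) (\<lambda>v. Suc (snd (dec (snd (dec v))))) u n = u + n"
  by (induction n) auto
lemma computes_add [computes_intros]: "computes orc code_add (\<lambda>x. fst (dec x) + snd (dec x))"
  unfolding code_add_def code_rec_prev_def
  by (rule computes_cong, (rule computes_intros)+) (simp add: prim_rec_add[simplified])

definition "code_pred = code_comp (code_rec code_zero code_rec_count) (code_pair code_zero code_id)"
lemma computes_pred [computes_intros]: "computes orc code_pred (\<lambda>x. x - 1)"
proof -
  have h: "prim_rec (\<lambda>x. 0) (\<lambda>v. fst (dec (snd (dec v)))) u n = n - 1" for u n by (cases n) auto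
  show ?thesis unfolding code_pred_def code_rec_count_def
    by (rule computes_cong, (rule computes_intros)+) (simp add: h)
qed

definition "code_sub = code_rec code_id (code_comp code_pred code_rec_prev)"
lemma prim_rec_sub: "prim_rec (\<lambda>x. x) (\<lambda>v. snd (dec (snd (dec v))) - 1) u n = u - n"
  by (induction n) auto
lemma computes_sub [computes_intros]: "computes orc code_sub (\<lambda>x. fst (dec x) - snd (dec x))"
  unfolding code_sub_def code_rec_prev_def
  by (rule computes_cong, (rule computes_intros)+) (simp add: prim_rec_sub[simplified])

definition "code_ifz = code_rec code_fst (code_comp code_snd code_fst)"
lemma computes_ifz [computes_intros]: "computes orc code_ifz
    (\<lambda>x. if snd (dec x) = 0 then fst (dec (fst (dec x))) else snd (dec (fst (dec x))))"
proof -
  have h: "prim_rec (\<lambda>x. fst (dec x)) (\<lambda>v. snd (dec (fst (dec v)))) u n =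
      (if n = 0 then fst (dec u) else snd (dec u))" for u n
    by (cases n) auto
  show ?thesis unfolding code_ifz_def by (rule computes_cong, (rule computes_intros)+) (simp add: h)
qed

definition "code_mult = code_rec code_zero (code_ap2 code_add code_rec_prev code_fst)"
lemma prim_rec_mult: "prim_rec (\<lambda>x. 0) (\<lambda>v. snd (dec (snd (dec v))) + fst (dec v)) u n = u * n"
  by (induction n) auto
lemma computes_mult [computes_intros]: "computes orc code_mult (\<lambda>x. fst (dec x) * snd (dec x))"
  unfolding code_mult_def code_rec_prev_def
  by (rule computes_cong, (rule computes_intros)+) (simp add: prim_rec_mult[simplified])

definition "code_iter h = code_rec code_snd (code_ap2 h (code_comp code_fst code_fst) code_rec_prev)"

lemma prim_rec_iter: "prim_rec (\<lambda>x. snd (dec x))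
    (\<lambda>v. H (enc (fst (dec (fst (dec v))), snd (dec (snd (dec v)))))) u n
   = ((\<lambda>s. H (enc (fst (dec u), s))) ^^ n) (snd (dec u))"
  by (induction n) auto

lemma computes_iter [computes_intros]: "computes orc h H \<Longrightarrow> computes orc (code_iter h)
  (\<lambda>x. ((\<lambda>s. H (enc (fst (dec (fst (dec x))), s))) ^^ (snd (dec x))) (snd (dec (fst (dec x)))))"
  unfolding code_iter_def code_rec_prev_def
  by (rule computes_cong, (rule computes_intros | assumption)+)
    (simp add: prim_rec_iter[simplified])

datatype expr = Arg | Cst nat | Fst expr | Snd expr | Pair expr expr | Sc expr | Pr expr
  | Add expr expr | Sub expr expr | Mul expr expr | Ifz expr expr expr | Orc expr | Comp expr expr
  | Iter expr expr expr expr

primrec eval_expr :: "(nat \<Rightarrow> nat) \<Rightarrow> expr \<Rightarrow> nat \<Rightarrow> nat" where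
  "eval_expr orc Arg x = x"
| "eval_expr orc (Cst k) x = k"
| "eval_expr orc (Fst e) x = fst (dec (eval_expr orc e x))"
| "eval_expr orc (Snd e) x = snd (dec (eval_expr orc e x))"
| "eval_expr orc (Pair e1 e2) x = enc (eval_expr orc e1 x, eval_expr orc e2 x)"
| "eval_expr orc (Sc e) x = Suc (eval_expr orc e x)"
| "eval_expr orc (Pr e) x = eval_expr orc e x - 1"
| "eval_expr orc (Add e1 e2) x = eval_expr orc e1 x + eval_expr orc e2 x"
| "eval_expr orc (Sub e1 e2) x = eval_expr orc e1 x - eval_expr orc e2 x"
| "eval_expr orc (Mul e1 e2) x = eval_expr orc e1 x * eval_expr orc e2 x"
| "eval_expr orc (Ifz c e1 e2) x =
    (if eval_expr orc c x = 0 then eval_expr orc e1 x else eval_expr orc e2 x)"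
| "eval_expr orc (Orc e) x = orc (eval_expr orc e x)"
| "eval_expr orc (Comp e1 e2) x = eval_expr orc e1 (eval_expr orc e2 x)"
| "eval_expr orc (Iter s p i n) x =
    ((\<lambda>z. eval_expr orc s (enc (eval_expr orc p x, z))) ^^ (eval_expr orc n x)) (eval_expr orc i x)"

primrec compile_expr :: "expr \<Rightarrow> nat" where
  "compile_expr Arg = code_id"
| "compile_expr (Cst k) = code_const k"
| "compile_expr (Fst e) = code_comp code_fst (compile_expr e)"
| "compile_expr (Snd e) = code_comp code_snd (compile_expr e)"
| "compile_expr (Pair e1 e2) = code_pair (compile_expr e1) (compile_expr e2)"
| "compile_expr (Sc e) = code_comp code_succ (compile_expr e)"
| "compile_expr (Pr e) = code_comp code_pred (compile_expr e)"
| "compile_expr (Add e1 e2) = code_ap2 code_add (compile_expr e1) (compile_expr e2)"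
| "compile_expr (Sub e1 e2) = code_ap2 code_sub (compile_expr e1) (compile_expr e2)"
| "compile_expr (Mul e1 e2) = code_ap2 code_mult (compile_expr e1) (compile_expr e2)"
| "compile_expr (Ifz c e1 e2) = code_comp code_ifz
    (code_pair (code_pair (compile_expr e1) (compile_expr e2)) (compile_expr c))"
| "compile_expr (Orc e) = code_comp code_oracle (compile_expr e)"
| "compile_expr (Comp e1 e2) = code_comp (compile_expr e1) (compile_expr e2)"
| "compile_expr (Iter s p i n) = code_comp (code_iter (compile_expr s))
    (code_pair (code_pair (compile_expr p) (compile_expr i)) (compile_expr n))"

theorem computes_compile_expr: "computes orc (compile_expr e) (eval_expr orc e)"
proof (induction e)
  case (Iter s p i n)
  show ?case by (simp, rule computes_cong, (rule computes_intros | rule Iter.IH)+) simp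
qed (simp, rule computes_cong, (rule computes_intros | assumption)+, simp)+

lemma comp_compile_expr_iff: "comp orc (compile_expr e) x y \<longleftrightarrow> y = eval_expr orc e x"
  using computes_compile_expr computes_unique unfolding computes_def by metis

lemma prod_decode_0 [simp]: "dec 0 = (0, 0)"
  using prod_encode_inverse[of "(0,0)"] by (simp add: prod_encode_def)

lemma list_decode_Suc [simp]: "list_decode (Suc n) = fst (dec n) # list_decode (snd (dec n))"
  by (simp add: split_beta)

declare list_decode.simps(2) [simp del]

lemma length_le_list_encode: "length xs \<le> list_encode xs"
  by (induction xs) (auto intro: le_trans[OF _ le_prod_encode_2])

definition "Hd e = Fst (Pr e)"
definition "Tl e = Snd (Pr e)"
definition "CCons a b = Sc (Pair a b)"
lemma eval_Hd [simp]: "eval_expr orc (Hd e) x =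
    (case list_decode (eval_expr orc e x) of [] \<Rightarrow> 0 | h # t \<Rightarrow> h)"
  by (cases "eval_expr orc e x") (auto simp: Hd_def)
lemma eval_Tl [simp]: "eval_expr orc (Tl e) x = list_encode (tl (list_decode (eval_expr orc e x)))"
  by (cases "eval_expr orc e x") (auto simp: Tl_def)
lemma eval_CCons [simp]: "eval_expr orc (CCons a b) x =
    list_encode (eval_expr orc a x # list_decode (eval_expr orc b x))"
  by (simp add: CCons_def)

definition "Not1 a = Ifz a (Cst 1) (Cst 0)"
definition "And a b = Ifz a (Cst 0) (Ifz b (Cst 0) (Cst 1))"
definition "Or a b = Ifz a (Ifz b (Cst 0) (Cst 1)) (Cst 1)"
definition "Eq a b = Ifz (Add (Sub a b) (Sub b a)) (Cst 1) (Cst 0)"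
definition "Lt a b = Ifz (Sub b a) (Cst 0) (Cst 1)"
lemma eval_bool_ops [simp]:
  "eval_expr orc (Not1 a) x = of_bool (eval_expr orc a x = 0)"
  "eval_expr orc (And a b) x = of_bool (eval_expr orc a x \<noteq> 0 \<and> eval_expr orc b x \<noteq> 0)"
  "eval_expr orc (Or a b) x = of_bool (eval_expr orc a x \<noteq> 0 \<or> eval_expr orc b x \<noteq> 0)"
  "eval_expr orc (Eq a b) x = of_bool (eval_expr orc a x = eval_expr orc b x)"
  "eval_expr orc (Lt a b) x = of_bool (eval_expr orc a x < eval_expr orc b x)"
  by (auto simp: Not1_def And_def Or_def Eq_def Lt_def of_bool_def)

primrec fold_suffixes :: "(nat \<Rightarrow> nat list \<Rightarrow> nat \<Rightarrow> nat) \<Rightarrow> nat list \<Rightarrow> nat \<Rightarrow> nat" where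
  "fold_suffixes g [] c = c"
| "fold_suffixes g (h # t) c = fold_suffixes g t (g h t c)"

text \<open>A step that pops the head of a coded list while updating an accumulator; \<open>m\<close>
  iterations suffice, as a list is no longer than its code.\<close>

lemma funpow_list_loop:
  assumes "\<And>c. f (enc (0, c)) = enc (0, c)"
    and "\<And>h t c. f (enc (list_encode (h # t), c)) = enc (list_encode t, g h t c)"
    and "m \<le> n"
  shows "(f ^^ n) (enc (m, c)) = enc (0, fold_suffixes g (list_decode m) c)"
proof -
  have "(f ^^ n) (enc (list_encode xs, c)) = enc (0, fold_suffixes g xs c)" if "length xs \<le> n" for xs
    using that
  proof (induction xs arbitrary: n c)
    case Nil
    have "(f ^^ k) (enc (0, c)) = enc (0, c)" for k by (induction k) (simp_all add: assms(1))
    then show ?case by simp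
  next
    case (Cons h t)
    then obtain k where k: "n = Suc k" "length t \<le> k" by (cases n) auto
    have "(f ^^ n) (enc (list_encode (h # t), c)) = (f ^^ k) (f (enc (list_encode (h # t), c)))"
      unfolding k(1) funpow_Suc_right o_def ..
    also have "\<dots> = (f ^^ k) (enc (list_encode t, g h t c))" by (simp only: assms(2))
    also have "\<dots> = enc (0, fold_suffixes g t (g h t c))" using Cons.IH k(2) by blast
    finally show ?case by simp
  qed
  from this[of "list_decode m"] show ?thesis
    using length_le_list_encode[of "list_decode m"] assms(3) by simp
qed

primrec all_suffixes :: "(nat \<Rightarrow> nat list \<Rightarrow> bool) \<Rightarrow> nat list \<Rightarrow> bool" where
  "all_suffixes P [] = True"
| "all_suffixes P (h # t) = (P h t \<and> all_suffixes P t)"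

definition "AllSuffixes Q p l = Snd (Iter (Ifz (Fst (Snd Arg)) (Snd Arg)
     (Pair (Tl (Fst (Snd Arg))) (And (Snd (Snd Arg))
       (Comp Q (Pair (Fst Arg) (Pr (Fst (Snd Arg)))))))) p (Pair l (Cst 1)) l)"

lemma eval_AllSuffixes [simp]: "eval_expr orc (AllSuffixes Q p l) x =
    of_bool (all_suffixes (\<lambda>h t. eval_expr orc Q (enc (eval_expr orc p x, enc (h, list_encode t))) \<noteq> 0)
      (list_decode (eval_expr orc l x)))"
proof -
  let ?P = "\<lambda>h t. eval_expr orc Q (enc (eval_expr orc p x, enc (h, list_encode t))) \<noteq> 0"
  have "c \<le> 1 \<Longrightarrow>
      fold_suffixes (\<lambda>h t c. of_bool (c \<noteq> 0 \<and> ?P h t)) xs c = of_bool (c \<noteq> 0 \<and> all_suffixes ?P xs)"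
    for xs and c :: nat by (induction xs arbitrary: c) auto
  then show ?thesis unfolding AllSuffixes_def
    by (simp only: eval_expr.simps)
      (subst funpow_list_loop[where g="\<lambda>h t c. of_bool (c \<noteq> 0 \<and> ?P h t)"]; simp)
qed

definition "AnySuffix Q p l = Not1 (AllSuffixes (Not1 Q) p l)"
lemma all_suffixes_nth: "all_suffixes P xs \<longleftrightarrow> (\<forall>i<length xs. P (xs ! i) (drop (Suc i) xs))"
proof (induction xs)
  case (Cons a xs) then show ?case
    by (auto simp: nth_Cons' less_Suc_eq_0_disj)
qed simp

definition "claimed k R \<longleftrightarrow> (\<exists>E\<in>set R. fst (dec E) = k)"
definition "Claimed k l = AnySuffix (Eq (Fst (Fst (Snd Arg))) (Fst Arg)) k l"
lemma eval_Claimed [simp]: "eval_expr orc (Claimed k l) x =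
    of_bool (claimed (eval_expr orc k x) (list_decode (eval_expr orc l x)))"
proof -
  have "\<not> (\<forall>i<length xs. fst (dec (xs ! i)) \<noteq> k) \<longleftrightarrow> claimed k xs" for xs k
    unfolding claimed_def by (metis in_set_conv_nth)
  then show ?thesis unfolding Claimed_def AnySuffix_def
    by (simp add: all_suffixes_nth)
qed

definition "Len l = Snd (Iter (Ifz (Fst (Snd Arg)) (Snd Arg)
    (Pair (Tl (Fst (Snd Arg))) (Sc (Snd (Snd Arg))))) (Cst 0) (Pair l (Cst 0)) l)"
lemma eval_Len [simp]: "eval_expr orc (Len l) x = length (list_decode (eval_expr orc l x))"
proof -
  have "fold_suffixes (\<lambda>_ _ c. Suc c) xs c = c + length xs" for xs c
    by (induction xs arbitrary: c) simp_all
  then show ?thesis unfolding Len_def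
    by (simp only: eval_expr.simps) (subst funpow_list_loop[where g="\<lambda>_ _ c. Suc c"]; simp)
qed

definition "Nth l i = Hd (Iter (Tl (Snd Arg)) (Cst 0) l i)"
lemma eval_Nth [simp]: "eval_expr orc i x < length (list_decode (eval_expr orc l x)) \<Longrightarrow>
    eval_expr orc (Nth l i) x = list_decode (eval_expr orc l x) ! eval_expr orc i x"
proof -
  let ?f = "\<lambda>z. eval_expr orc (Tl (Snd Arg)) (enc (0, z))"
  have "(?f ^^ n) (list_encode xs) = list_encode (drop n xs)" for n xs
    by (induction n) (simp_all add: drop_Suc tl_drop)
  from this[of _ "list_decode (eval_expr orc l x)"] have h: "(?f ^^ n) (eval_expr orc l x) =
    list_encode (drop n (list_decode (eval_expr orc l x)))" for n by simp
  assume "eval_expr orc i x < length (list_decode (eval_expr orc l x))"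
  then show ?thesis unfolding Nth_def
    by (simp only: eval_expr.simps eval_Hd h list_encode_inverse Cons_nth_drop_Suc[symmetric]) simp
qed

definition "RevApp a b = Snd (Iter (Ifz (Fst (Snd Arg)) (Snd Arg)
    (Pair (Tl (Fst (Snd Arg))) (CCons (Hd (Fst (Snd Arg))) (Snd (Snd Arg))))) (Cst 0) (Pair a b) a)"
lemma eval_RevApp [simp]: "eval_expr orc (RevApp a b) x =
    list_encode (rev (list_decode (eval_expr orc a x)) @ list_decode (eval_expr orc b x))"
proof -
  have "fold_suffixes (\<lambda>h _ c. Suc (enc (h, c))) xs c = list_encode (rev xs @ list_decode c)" for xs c
    by (induction xs arbitrary: c) simp_all
  then show ?thesis unfolding RevApp_def
    by (simp only: eval_expr.simps) (subst funpow_list_loop[where g="\<lambda>h _ c. Suc (enc (h, c))"]; simp)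
qed

definition "App a b = RevApp (RevApp a (Cst 0)) b"
lemma eval_App [simp]: "eval_expr orc (App a b) x =
    list_encode (list_decode (eval_expr orc a x) @ list_decode (eval_expr orc b x))"
  by (simp add: App_def)

definition "DivMod9 e = Iter (Ifz (Sub (Cst 8) (Snd (Snd Arg))) (Pair (Sc (Fst (Snd Arg))) (Cst 0))
    (Pair (Fst (Snd Arg)) (Sc (Snd (Snd Arg))))) (Cst 0) (Cst 0) e"
definition "Mod9 e = Snd (DivMod9 e)"
definition "Div9 e = Fst (DivMod9 e)"
lemma eval_DivMod9: "eval_expr orc (DivMod9 e) x =
    enc (eval_expr orc e x div 9, eval_expr orc e x mod 9)"
proof -
  let ?f = "\<lambda>z. eval_expr orc (Ifz (Sub (Cst 8) (Snd (Snd Arg))) (Pair (Sc (Fst (Snd Arg))) (Cst 0))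
    (Pair (Fst (Snd Arg)) (Sc (Snd (Snd Arg))))) (enc (0, z))"
  have e00: "enc (0, 0) = 0" by (simp add: prod_encode_def)
  have "(?f ^^ n) 0 = enc (n div 9, n mod 9)" for n
  proof (induction n)
    case (Suc n)
    have "n mod 9 < 9" by simp
    then show ?case using Suc by (auto simp: div_Suc mod_Suc)
  qed (simp add: e00)
  note h = this
  show ?thesis unfolding DivMod9_def by (simp only: eval_expr.simps(2) eval_expr.simps(14) h)
qed
lemma eval_Mod9 [simp]: "eval_expr orc (Mod9 e) x = eval_expr orc e x mod 9"
    by (simp add: Mod9_def eval_DivMod9)
lemma eval_Div9 [simp]: "eval_expr orc (Div9 e) x = eval_expr orc e x div 9"
    by (simp add: Div9_def eval_DivMod9)

section \<open>Derivations of oracle computations\<close>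

text \<open>A derivation is a list of entries \<open>enc (claim t c x y, h)\<close>, each justified by
  entries further down the list.  A claim of kind 0 says that program \<open>c\<close> on input \<open>x\<close>
  halts with output \<open>y\<close>; one of kind 1 says that the body \<open>c div 9\<close> of the minimisation
  \<open>c\<close> takes positive values at all \<open>enc (x, z)\<close> with \<open>z < y\<close>.  The witness \<open>h\<close> is an
  intermediate value (of a composition, a previous recursion step, or the body).
  Oracle answers are checked against the relation \<open>Q\<close>.\<close>

definition claim :: "nat \<Rightarrow> nat \<Rightarrow> nat \<Rightarrow> nat \<Rightarrow> nat" where
  "claim t c x y = enc (t, enc (c, enc (x, y)))"

lemma claim_eq_iff [simp]: "claim t c x y = claim t' c' x' y' \<longleftrightarrow> t = t' \<and> c = c' \<and> x = x' \<and> y = y'"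
  unfolding claim_def by (metis prod_encode_inverse prod.inject)

definition justified :: "(nat \<Rightarrow> nat \<Rightarrow> bool) \<Rightarrow> nat \<Rightarrow> nat \<Rightarrow> nat \<Rightarrow> nat \<Rightarrow> nat \<Rightarrow> nat list \<Rightarrow> bool" where
"justified Q t c x y h R = (let m = c mod 9; f = fst (dec (c div 9)); g = snd (dec (c div 9)) in
 if t = 0 then (if m = 0 then y = 0 else if m = 1 then y = Suc x else if m = 2 then y = fst (dec x)
   else if m = 3 then y = snd (dec x)
   else if m = 4 then claimed (claim 0 f x (fst (dec y))) R \<and> claimed (claim 0 g x (snd (dec y))) R
   else if m = 5 then claimed (claim 0 g x h) R \<and> claimed (claim 0 f h y) R
   else if m = 6 then Q x y
   else if m = 7 then (if snd (dec x) = 0 then claimed (claim 0 f (fst (dec x)) y) R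
        else claimed (claim 0 c (enc (fst (dec x), snd (dec x) - 1)) h) R \<and>
             claimed (claim 0 g (enc (fst (dec x), enc (snd (dec x) - 1, h))) y) R)
   else claimed (claim 0 (c div 9) (enc (x, y)) 0) R \<and> claimed (claim 1 c x y) R)
 else if t = 1 then (y = 0 \<or> (0 < h \<and> claimed (claim 1 c x (y - 1)) R \<and>
   claimed (claim 0 (c div 9) (enc (x, y - 1)) h) R))
 else False)"

definition entry_fields :: "nat \<Rightarrow> nat \<times> nat \<times> nat \<times> nat \<times> nat" where
  "entry_fields E = (let k = fst (dec E) in
      (fst (dec k), fst (dec (snd (dec k))), fst (dec (snd (dec (snd (dec k))))),
      snd (dec (snd (dec (snd (dec k))))), snd (dec E)))"

lemma entry_fields_encode [simp]: "entry_fields (enc (claim t c x y, h)) = (t, c, x, y, h)"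
  by (simp add: entry_fields_def claim_def)

lemma entry_cases: "\<exists>t c x y h. E = enc (claim t c x y, h)"
proof -
  obtain k h where "dec E = (k, h)" by (cases "dec E")
  moreover obtain t r1 where "dec k = (t, r1)" by (cases "dec k")
  moreover obtain c r2 where "dec r1 = (c, r2)" by (cases "dec r1")
  moreover obtain x y where "dec r2 = (x, y)" by (cases "dec r2")
  ultimately show ?thesis unfolding claim_def by (metis prod_decode_inverse)
qed

definition justified_entry :: "(nat \<Rightarrow> nat \<Rightarrow> bool) \<Rightarrow> nat \<Rightarrow> nat list \<Rightarrow> bool" where
  "justified_entry Q E R = (case entry_fields E of (t, c, x, y, h) \<Rightarrow> justified Q t c x y h R)"

primrec derivation :: "(nat \<Rightarrow> nat \<Rightarrow> bool) \<Rightarrow> nat list \<Rightarrow> bool" where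
  "derivation Q [] = True"
| "derivation Q (E # R) = (justified_entry Q E R \<and> derivation Q R)"

definition mu_below :: "(nat \<Rightarrow> nat) \<Rightarrow> nat \<Rightarrow> nat \<Rightarrow> nat \<Rightarrow> bool" where
  "mu_below orc c x y = (\<forall>z<y. \<exists>w>0. comp orc (c div 9) (enc (x, z)) w)"

definition claim_holds :: "(nat \<Rightarrow> nat) \<Rightarrow> nat \<Rightarrow> bool" where
  "claim_holds orc k =
    (let t = fst (dec k); c = fst (dec (snd (dec k)));
         x = fst (dec (snd (dec (snd (dec k))))); y = snd (dec (snd (dec (snd (dec k))))) in
     if t = 0 then comp orc c x y else if t = 1 then mu_below orc c x y else True)"

lemma claim_holds_claim [simp]: "claim_holds orc (claim t c x y) =
    (if t = 0 then comp orc c x y else if t = 1 then mu_below orc c x y else True)"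
  by (simp add: claim_holds_def claim_def)

lemma claimed_holds: "claimed k R \<Longrightarrow> \<forall>E\<in>set R. claim_holds orc (fst (dec E)) \<Longrightarrow> claim_holds orc k"
  unfolding claimed_def by blast

lemma less_9_cases:
  "(k::nat) < 9 \<Longrightarrow> k = 0 \<or> k = 1 \<or> k = 2 \<or> k = 3 \<or> k = 4 \<or> k = 5 \<or> k = 6 \<or> k = 7 \<or> k = 8"
  by linarith

lemma prod_decode_div9: "dec (c div 9) = (fst (dec (c div 9)), snd (dec (c div 9)))" by simp

lemma justified_comp_sound:
  assumes j: "justified Q 0 c x y h R" and Q: "\<forall>a b. Q a b \<longrightarrow> b = orc a"
    and M0: "\<And>c x y. claimed (claim 0 c x y) R \<Longrightarrow> comp orc c x y"
    and M1: "\<And>c x y. claimed (claim 1 c x y) R \<Longrightarrow> mu_below orc c x y"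
  shows "comp orc c x y"
proof -
  let ?f = "fst (dec (c div 9))" and ?g = "snd (dec (c div 9))"
  consider "c mod 9 = 0" | "c mod 9 = 1" | "c mod 9 = 2" | "c mod 9 = 3" | "c mod 9 = 4"
    | "c mod 9 = 5" | "c mod 9 = 6" | "c mod 9 = 7" | "c mod 9 = 8" using less_9_cases[of "c mod 9"] by fastforce
  then show ?thesis
  proof cases
    case 1 then show ?thesis using j by (simp add: justified_def Let_def comp.c_zero)
  next
    case 2 then show ?thesis using j by (simp add: justified_def Let_def comp.c_succ)
  next
    case 3 then show ?thesis using j by (simp add: justified_def Let_def comp.c_fst)
  next
    case 4 then show ?thesis using j by (simp add: justified_def Let_def comp.c_snd)
  next
    case 5
    then have "comp orc ?f x (fst (dec y))" "comp orc ?g x (snd (dec y))"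
      using j M0 by (simp_all add: justified_def Let_def)
    then have "comp orc c x (enc (fst (dec y), snd (dec y)))"
      by (rule comp.c_pair[OF 5 prod_decode_div9])
    then show ?thesis by simp
  next
    case 6
    then have "comp orc ?g x h" "comp orc ?f h y" using j M0
      by (simp_all add: justified_def Let_def)
    then show ?thesis by (intro comp.c_comp[OF 6 prod_decode_div9])
  next
    case 7
    then have "y = orc x" using j Q by (simp add: justified_def Let_def)
    then show ?thesis using 7 by (simp add: comp.c_oracle)
  next
    case 8
    obtain u n where x: "dec x = (u, n)" by (cases "dec x")
    show ?thesis
    proof (cases n)
      case 0
      then have "comp orc ?f u y" using j 8 x M0 by (simp add: justified_def Let_def)
      then show ?thesis using x 0 by (intro comp.c_rec0[OF 8 prod_decode_div9]) auto
    next
      case (Suc n')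
      then have "comp orc c (enc (u, n')) h" "comp orc ?g (enc (u, enc (n', h))) y"
        using j 8 x M0 by (simp_all add: justified_def Let_def)
      then show ?thesis using x Suc by (intro comp.c_recS[OF 8 prod_decode_div9, of x u n']) auto
    qed
  next
    case 9
    then have "comp orc (c div 9) (enc (x, y)) 0" "mu_below orc c x y"
      using j M0 M1 by (simp_all add: justified_def Let_def)
    then show ?thesis using 9 by (intro comp.c_mu[OF 9]) (auto simp: mu_below_def)
  qed
qed

lemma justified_mu_below_sound:
  assumes j: "justified Q 1 c x y h R"
    and M0: "\<And>c x y. claimed (claim 0 c x y) R \<Longrightarrow> comp orc c x y"
    and M1: "\<And>c x y. claimed (claim 1 c x y) R \<Longrightarrow> mu_below orc c x y"
  shows "mu_below orc c x y"
proof (cases "y = 0")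
  case True then show ?thesis by (simp add: mu_below_def)
next
  case False
  then have "0 < h" "mu_below orc c x (y - 1)" "comp orc (c div 9) (enc (x, y - 1)) h"
    using j M0 M1 by (auto simp: justified_def)
  then show ?thesis unfolding mu_below_def using False by (metis less_Suc_eq Suc_pred' not_gr_zero)
qed

lemma justified_sound:
  assumes j: "justified Q t c x y h R" and Q: "\<forall>a b. Q a b \<longrightarrow> b = orc a"
    and R: "\<forall>E\<in>set R. claim_holds orc (fst (dec E))"
  shows "claim_holds orc (claim t c x y)"
proof -
  have M: "claim_holds orc (claim t c x y)" if "claimed (claim t c x y) R" for t c x y
    using R claimed_holds that by blast
  have M0: "comp orc c x y" if "claimed (claim 0 c x y) R" for c x y
    using M[OF that] by simp
  have M1: "mu_below orc c x y" if "claimed (claim 1 c x y) R" for c x y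
    using M[OF that] by simp
  have "t = 0 \<or> t = 1" by (rule ccontr) (use j in \<open>simp add: justified_def Let_def\<close>)
  then show ?thesis
    using justified_comp_sound[OF _ Q M0 M1] justified_mu_below_sound[OF _ M0 M1] j by auto
qed

lemma derivation_sound: "derivation Q L \<Longrightarrow> \<forall>a b. Q a b \<longrightarrow> b = orc a \<Longrightarrow>
    \<forall>E\<in>set L. claim_holds orc (fst (dec E))"
proof (induction L)
  case (Cons E R)
  obtain t c x y h where E: "E = enc (claim t c x y, h)" using entry_cases by blast
  have "justified Q t c x y h R" using Cons.prems E by (simp add: justified_entry_def)
  then have "claim_holds orc (claim t c x y)" using justified_sound Cons by simp
  then show ?case using Cons E by simp
qed simp

corollary derivation_comp: "derivation Q L \<Longrightarrow> \<forall>a b. Q a b \<longrightarrow> b = orc a \<Longrightarrow> claimed (claim 0 c x y) L \<Longrightarrow>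
    comp orc c x y"
  using derivation_sound claimed_holds claim_holds_claim by (metis)

lemma justified_mono:
  assumes "justified Q t c x y h R" "\<And>k. claimed k R \<Longrightarrow> claimed k R'"
  shows "justified Q t c x y h R'"
  using assms unfolding justified_def Let_def by (simp split: if_splits) blast+

lemma claimed_append: "claimed k A \<Longrightarrow> claimed k (A @ B)" "claimed k B \<Longrightarrow>
    claimed k (A @ B)" "claimed k R \<Longrightarrow> claimed k (E # R)"
  by (auto simp: claimed_def)

lemma justified_entry_mono:
  "justified_entry Q E R \<Longrightarrow> (\<And>k. claimed k R \<Longrightarrow> claimed k R') \<Longrightarrow> justified_entry Q E R'"
  unfolding justified_entry_def by (auto split: prod.splits intro: justified_mono)

lemma derivation_append: "derivation Q A \<Longrightarrow> derivation Q B \<Longrightarrow> derivation Q (A @ B)"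
  by (induction A) (auto intro: justified_entry_mono claimed_append)

lemma justified_entry_claim: "justified_entry Q (enc (claim t c x y, h)) R =
    justified Q t c x y h R"
  by (simp add: justified_entry_def)

lemma derivation_Cons_claim:
  assumes "derivation Q L" "justified Q t c x y h L"
  shows "\<exists>L'. derivation Q L' \<and> claimed (claim t c x y) L'"
  using assms by (intro exI[of _ "enc (claim t c x y, h) # L"])
    (simp add: justified_entry_claim claimed_def)

lemma mu_below_derivation:
  assumes "\<forall>z<y. \<exists>w>0. \<exists>L. derivation Q L \<and> claimed (claim 0 (c div 9) (enc (x, z)) w) L"
  shows "\<exists>L. derivation Q L \<and> claimed (claim 1 c x y) L"
  using assms
proof (induction y)
  case 0
  show ?case by (rule derivation_Cons_claim[where L="[]" and h=0]) (simp_all add: justified_def)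
next
  case (Suc y)
  then obtain L1 where L1: "derivation Q L1" "claimed (claim 1 c x y) L1" by auto
  obtain w L2 where L2: "0 < w" "derivation Q L2" "claimed (claim 0 (c div 9) (enc (x, y)) w) L2"
    using Suc.prems by blast
  have "justified Q 1 c x (Suc y) w (L1 @ L2)" using L1 L2
    by (simp add: justified_def claimed_append)
  then show ?case using L1 L2 by (blast intro: derivation_Cons_claim derivation_append)
qed

theorem comp_derivation: "comp orc c x y \<Longrightarrow> \<exists>L. derivation (\<lambda>a b. b = orc a) L \<and>
    claimed (claim 0 c x y) L"
proof (induction rule: comp.induct)
  case (c_pair c f g x y z)
  then obtain L1 L2 where L: "derivation (\<lambda>a b. b = orc a) L1" "claimed (claim 0 f x y) L1"
    "derivation (\<lambda>a b. b = orc a) L2" "claimed (claim 0 g x z) L2" by blast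
  have "justified (\<lambda>a b. b = orc a) 0 c x (enc (y, z)) 0 (L1 @ L2)" using L c_pair.hyps
    by (simp add: justified_def claimed_append)
  then show ?case using L by (blast intro: derivation_Cons_claim derivation_append)
next
  case (c_comp c f g x y z)
  then obtain L1 L2 where L: "derivation (\<lambda>a b. b = orc a) L1" "claimed (claim 0 g x y) L1"
    "derivation (\<lambda>a b. b = orc a) L2" "claimed (claim 0 f y z) L2" by blast
  have "justified (\<lambda>a b. b = orc a) 0 c x z y (L1 @ L2)" using L c_comp.hyps
    by (simp add: justified_def claimed_append)
  then show ?case using L by (blast intro: derivation_Cons_claim derivation_append)
next
  case (c_rec0 c f g x u y)
  then obtain L1 where L: "derivation (\<lambda>a b. b = orc a) L1" "claimed (claim 0 f u y) L1" by blast
  have "justified (\<lambda>a b. b = orc a) 0 c x y 0 L1" using L c_rec0.hyps by (simp add: justified_def)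
  then show ?case using L by (blast intro: derivation_Cons_claim)
next
  case (c_recS c f g x u n z y)
  then obtain L1 L2 where L: "derivation (\<lambda>a b. b = orc a) L1" "claimed (claim 0 c (enc (u, n)) z)
    L1"
    "derivation (\<lambda>a b. b = orc a) L2" "claimed (claim 0 g (enc (u, enc (n, z))) y) L2" by blast
  have "justified (\<lambda>a b. b = orc a) 0 c x y z (L1 @ L2)" using L c_recS.hyps
    by (simp add: justified_def claimed_append)
  then show ?case using L by (blast intro: derivation_Cons_claim derivation_append)
next
  case (c_mu c x y)
  then obtain L1 where L1: "derivation (\<lambda>a b. b = orc a) L1" "claimed
    (claim 0 (c div 9) (enc (x, y)) 0) L1"
    by blast
  obtain L2 where L2: "derivation (\<lambda>a b. b = orc a) L2" "claimed (claim 1 c x y) L2"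
    using mu_below_derivation c_mu(4) by blast
  have "justified (\<lambda>a b. b = orc a) 0 c x y 0 (L1 @ L2)" using L1 L2 c_mu(1)
    by (simp add: justified_def claimed_append)
  then show ?case using L1 L2 by (blast intro: derivation_Cons_claim derivation_append)
qed (rule derivation_Cons_claim[where L="[]" and h=0]; simp add: justified_def)+

lemma input_le_entry: "x \<le> enc (claim t c x y, h)"
proof -
  have "x \<le> enc (x, y)" by (rule le_prod_encode_1)
  also have "\<dots> \<le> enc (c, enc (x, y))" by (rule le_prod_encode_2)
  also have "\<dots> \<le> claim t c x y" unfolding claim_def by (rule le_prod_encode_2)
  also have "\<dots> \<le> enc (claim t c x y, h)" by (rule le_prod_encode_1)
  finally show ?thesis .
qed

lemma derivation_restrict: "derivation Q L \<Longrightarrow> \<forall>E\<in>set L. E < N \<Longrightarrow> derivation (\<lambda>a b. a < N \<and> Q a b) L"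
proof (induction L)
  case (Cons E R)
  obtain t c x y h where E: "E = enc (claim t c x y, h)" using entry_cases by blast
  have "x < N" using Cons.prems(2) E input_le_entry by (metis le_less_trans list.set_intros(1))
  have "justified Q t c x y h R" using Cons.prems E by (simp add: justified_entry_claim)
  then have "justified (\<lambda>a b. a < N \<and> Q a b) t c x y h R" using \<open>x < N\<close>
    unfolding justified_def Let_def by (simp split: if_splits)
  then show ?case using Cons E by (simp add: justified_entry_claim)
qed simp

text \<open>The oracle graph coded by \<open>md\<close>: the zero oracle for \<open>md = 0\<close>, and the finite
  table \<open>\<tau>\<close> (undefined beyond its length) for \<open>md = Suc (list_encode \<tau>)\<close>.\<close>

definition table_oracle :: "nat \<Rightarrow> nat \<Rightarrow> nat \<Rightarrow> bool" where
  "table_oracle md a b =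
    (if md = 0 then b = 0 else a < length (list_decode (md - 1)) \<and> b = list_decode (md - 1) ! a)"

definition "ClaimX t c x y = Pair t (Pair c (Pair x y))"
lemma eval_ClaimX [simp]: "eval_expr orc (ClaimX t c x y) z =
    claim (eval_expr orc t z) (eval_expr orc c z) (eval_expr orc x z) (eval_expr orc y z)"
  by (simp add: ClaimX_def claim_def)

definition "TableX md x y = Ifz md (Eq y (Cst 0)) (And (Lt x (Len (Pr md))) (Eq y (Nth (Pr md) x)))"
lemma eval_TableX [simp]: "eval_expr orc (TableX md x y) z =
    of_bool (table_oracle (eval_expr orc md z) (eval_expr orc x z) (eval_expr orc y z))"
  by (cases "eval_expr orc x z < length (list_decode (eval_expr orc md z - 1))")
    (auto simp: TableX_def table_oracle_def)

definition "Case9 m A0 A1 A2 A3 A4 A5 A6 A7 A8 =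
  Ifz (Eq m (Cst 0)) (Ifz (Eq m (Cst 1)) (Ifz (Eq m (Cst 2)) (Ifz (Eq m (Cst 3)) (Ifz (Eq m (Cst 4))
  (Ifz (Eq m (Cst 5)) (Ifz (Eq m (Cst 6)) (Ifz (Eq m (Cst 7)) A8 A7) A6) A5) A4) A3) A2) A1) A0"

lemma eval_Case9: "eval_expr orc m z < 9 \<Longrightarrow> eval_expr orc (Case9 m A0 A1 A2 A3 A4 A5 A6 A7 A8) z =
    (if eval_expr orc m z = 0 then eval_expr orc A0 z
     else if eval_expr orc m z = 1 then eval_expr orc A1 z
     else if eval_expr orc m z = 2 then eval_expr orc A2 z
     else if eval_expr orc m z = 3 then eval_expr orc A3 z
     else if eval_expr orc m z = 4 then eval_expr orc A4 z
     else if eval_expr orc m z = 5 then eval_expr orc A5 z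
     else if eval_expr orc m z = 6 then eval_expr orc A6 z
     else if eval_expr orc m z = 7 then eval_expr orc A7 z
     else eval_expr orc A8 z)"
  unfolding Case9_def by simp

definition "JustifiedX = (let md = Fst Arg; E = Fst (Snd Arg); R = Snd (Snd Arg);
  k = Fst E; h = Snd E; t = Fst k; c = Fst (Snd k); x = Fst (Snd (Snd k)); y = Snd (Snd (Snd k));
  d = Div9 c; f = Fst d; g = Snd d; Z = Cst 0; Mm = (\<lambda>key. Claimed key R) in
  Ifz t
   (Case9 (Mod9 c)
     (Eq y Z) (Eq y (Sc x)) (Eq y (Fst x)) (Eq y (Snd x))
     (And (Mm (ClaimX Z f x (Fst y))) (Mm (ClaimX Z g x (Snd y))))
     (And (Mm (ClaimX Z g x h)) (Mm (ClaimX Z f h y)))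
     (TableX md x y)
     (Ifz (Snd x) (Mm (ClaimX Z f (Fst x) y))
        (And (Mm (ClaimX Z c (Pair (Fst x) (Pr (Snd x))) h))
          (Mm (ClaimX Z g (Pair (Fst x) (Pair (Pr (Snd x)) h)) y))))
     (And (Mm (ClaimX Z d (Pair x y) Z)) (Mm (ClaimX (Cst 1) c x y))))
   (Ifz (Pr t)
     (Or (Eq y Z) (And (Lt Z h) (And (Mm (ClaimX (Cst 1) c x (Pr y)))
       (Mm (ClaimX Z d (Pair x (Pr y)) h)))))
     Z))"

lemma eval_JustifiedX: "eval_expr orc JustifiedX (enc (md, enc (E, R))) =
    of_bool (justified_entry (table_oracle md) E (list_decode R))"
proof -
  obtain t c x y h where E: "E = enc (claim t c x y, h)" using entry_cases by blast
  have cm: "c mod 9 < 9" by simp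
  show ?thesis
  proof (cases "t = 0")
    case True
    then show ?thesis unfolding E justified_entry_claim JustifiedX_def Let_def
      using less_9_cases[OF cm] by (simp add: eval_Case9 justified_def claim_def)
  next
    case False
    then show ?thesis unfolding E justified_entry_claim JustifiedX_def Let_def
      by (simp add: justified_def claim_def conj_commute conj_left_commute)
  qed
qed

lemma derivation_all_suffixes: "derivation Q xs = all_suffixes (\<lambda>h t. justified_entry Q h t) xs"
  by (induction xs) auto

definition "DerivationX md l = AllSuffixes JustifiedX md l"
lemma eval_DerivationX [simp]: "eval_expr orc (DerivationX md l) z =
    of_bool (derivation (table_oracle (eval_expr orc md z)) (list_decode (eval_expr orc l z)))"
  by (simp add: DerivationX_def eval_JustifiedX derivation_all_suffixes)

definition "HaltsX md e x y l = And (DerivationX md l) (Claimed (ClaimX (Cst 0) e x y) l)"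
lemma eval_HaltsX [simp]: "eval_expr orc (HaltsX md e x y l) z =
    of_bool (derivation (table_oracle (eval_expr orc md z)) (list_decode (eval_expr orc l z)) \<and>
   claimed (claim 0 (eval_expr orc e z) (eval_expr orc x z) (eval_expr orc y z))
     (list_decode (eval_expr orc l z)))"
  by (simp add: HaltsX_def)

lemma table_oracle_0: "table_oracle 0 = (\<lambda>a b. b = 0)" by (simp add: table_oracle_def fun_eq_iff)
lemma table_oracle_Suc: "table_oracle (Suc (list_encode tau)) =
    (\<lambda>a b. a < length tau \<and> b = tau ! a)" by (simp add: table_oracle_def fun_eq_iff)

theorem halts_iff_derivation: "(\<exists>y. comp (\<lambda>_. 0) e x y) \<longleftrightarrow>
    (\<exists>y L. derivation (table_oracle 0) L \<and> claimed (claim 0 e x y) L)"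
  unfolding table_oracle_0 using comp_derivation derivation_comp by fastforce

lemma comp_use_principle:
  assumes "comp p c x y"
  obtains N L where "M \<le> N" "derivation (table_oracle (Suc (list_encode (map p [0..<N])))) L"
    "claimed (claim 0 c x y) L"
proof -
  obtain L where L: "derivation (\<lambda>a b. b = p a) L" "claimed (claim 0 c x y) L"
    using comp_derivation[OF assms] by blast
  define N where "N = max (Suc (sum_list L)) M"
  have "\<forall>E\<in>set L. E < N" using member_le_sum_list by (fastforce simp: N_def)
  then have "derivation (\<lambda>a b. a < N \<and> b = p a) L" using derivation_restrict L(1) by blast
  moreover have "table_oracle (Suc (list_encode (map p [0..<N]))) = (\<lambda>a b. a < N \<and> b = p a)"
    by (auto simp: table_oracle_Suc fun_eq_iff)
  ultimately have "derivation (table_oracle (Suc (list_encode (map p [0..<N])))) L" by simp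
  moreover have "M \<le> N" by (simp add: N_def)
  ultimately show ?thesis using that L(2) by blast
qed

lemma comp_of_table_prefix:
  assumes "derivation (table_oracle (Suc (list_encode \<tau>))) L" "claimed (claim 0 c x y) L"
    and "\<And>i. i < length \<tau> \<Longrightarrow> \<tau> ! i = p i"
  shows "comp p c x y"
proof -
  have "\<forall>a b. table_oracle (Suc (list_encode \<tau>)) a b \<longrightarrow> b = p a"
    using assms(3) by (auto simp: table_oracle_Suc)
  then show ?thesis using derivation_comp assms(1,2) by blast
qed

definition self_halts_on_table :: "nat list \<Rightarrow> nat \<Rightarrow> bool" where
  "self_halts_on_table \<tau> s \<longleftrightarrow>
     (\<exists>y L. derivation (table_oracle (Suc (list_encode \<tau>))) L \<and> claimed (claim 0 s s y) L)"

abbreviation smn :: "nat \<Rightarrow> nat \<Rightarrow> nat" where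
  "smn M k \<equiv> code_comp M (code_pair (code_const k) code_id)"

lemma comp_code_comp_elim: assumes "comp orc (code_comp f g) x r" shows "\<exists>y. comp orc g x y \<and>
    comp orc f y r"
  using assms
proof (cases rule: comp.cases)
  case (c_comp f' g' y) then show ?thesis by auto
qed (simp_all only: code_constructor_simps; simp)+

lemma comp_smn_iff: "comp orc (smn M k) x r \<longleftrightarrow> comp orc M (enc (k, x)) r"
proof
  assume "comp orc (smn M k) x r"
  then obtain y where y: "comp orc (code_pair (code_const k) code_id) x y" "comp orc M y r"
    using comp_code_comp_elim by blast
  have "comp orc (code_pair (code_const k) code_id) x (enc (k, x))"
    using computes_pair[OF computes_const computes_id] unfolding computes_def by simp
  then have "y = enc (k, x)" using y(1) comp_deterministic by blast
  then show "comp orc M (enc (k, x)) r" using y(2) by simp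
next
  assume "comp orc M (enc (k, x)) r"
  moreover have "comp orc (code_pair (code_const k) code_id) x (enc (k, x))"
    using computes_pair[OF computes_const computes_id] unfolding computes_def by simp
  moreover have d: "dec (smn M k div 9) = (M, code_pair (code_const k) code_id)" by simp
  ultimately show "comp orc (smn M k) x r" using comp.c_comp[OF code_constructor_simps(3)] by blast
qed

definition "CodeComp a b = Add (Cst 5) (Mul (Cst 9) (Pair a b))"
definition "CodePair a b = Add (Cst 4) (Mul (Cst 9) (Pair a b))"
definition "CodeConst e = Iter (CodeComp (Cst code_succ) (Snd Arg)) (Cst 0) (Cst 0) e"
lemma eval_code_ops [simp]:
  "eval_expr orc (CodeComp a b) z = code_comp (eval_expr orc a z) (eval_expr orc b z)"
  "eval_expr orc (CodePair a b) z = code_pair (eval_expr orc a z) (eval_expr orc b z)"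
  by (simp_all add: CodeComp_def CodePair_def code_comp_def code_pair_def)
lemma eval_CodeConst [simp]: "eval_expr orc (CodeConst e) z = code_const (eval_expr orc e z)"
proof -
  have "((\<lambda>z. eval_expr orc (CodeComp (Cst code_succ) (Snd Arg)) (enc (0, z))) ^^ n) 0 =
    code_const n" for n
    by (induction n) (simp_all add: code_zero_def)
  then show ?thesis by (simp add: CodeConst_def del: eval_code_ops)
qed

definition "Smn M e = CodeComp (Cst M) (CodePair (CodeConst e) (Cst code_id))"
lemma eval_Smn [simp]: "eval_expr orc (Smn M e) z = smn M (eval_expr orc e z)"
  by (simp add: Smn_def)

section \<open>The jump of a point reduces to the jump of any of its names\<close>

definition "NameSearchX = Not1 (HaltsX (Cst 0) (Fst (Fst Arg)) (Orc (Fst (Snd Arg)))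
    (Fst (Snd (Snd Arg))) (Snd (Snd (Snd Arg))))"
definition "code_name_search = code_mu (compile_expr NameSearchX)"

lemma ex_prod_decode3: "(\<exists>t. P (fst (dec t)) (fst (dec (snd (dec t)))) (snd (dec (snd (dec t))))) \<longleftrightarrow>
    (\<exists>a b c. P a b c)"
  by (metis fst_conv prod_encode_inverse snd_conv)

lemma halts_code_name_search_iff: "(\<exists>r. comp p code_name_search (enc (e, z)) r) \<longleftrightarrow>
    (\<exists>n y L. derivation (table_oracle 0) L \<and> claimed (claim 0 e (p n) y) L)"
proof -
  have "(\<exists>r. comp p code_name_search (enc (e, z)) r) \<longleftrightarrow>
    (\<exists>t. eval_expr p NameSearchX (enc (enc (e, z), t)) = 0)"
    unfolding code_name_search_def by (rule halts_code_mu_iff[OF computes_compile_expr])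
  also have "\<dots> \<longleftrightarrow> (\<exists>n y L. derivation (table_oracle 0) (list_decode L) \<and>
    claimed (claim 0 e (p n) y) (list_decode L))"
    unfolding NameSearchX_def by (simp add: ex_prod_decode3[where P="\<lambda>n y L. derivation
      (table_oracle 0) (list_decode L) \<and> claimed (claim 0 e (p n) y) (list_decode L)"])
  also have "\<dots> \<longleftrightarrow> (\<exists>n y L. derivation (table_oracle 0) L \<and> claimed (claim 0 e (p n) y) L)"
    by (metis list_encode_inverse)
  finally show ?thesis .
qed

theorem pjump_le_fjump_name:
  assumes "range p = Nbase a x"
  shows "turing_le (pjump a x) (fjump p)"
proof -
  have key: "smn code_name_search n \<in> fjump p \<longleftrightarrow> n \<in> pjump a x" for n
  proof -
    have "smn code_name_search n \<in> fjump p \<longleftrightarrow>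
      (\<exists>r. comp p code_name_search (enc (n, smn code_name_search n)) r)"
      unfolding fjump_def using comp_smn_iff by blast
    also have "\<dots> \<longleftrightarrow> (\<exists>m y. comp (\<lambda>_. 0) n (p m) y)"
      unfolding halts_code_name_search_iff halts_iff_derivation by blast
    also have "\<dots> \<longleftrightarrow> (\<exists>k\<in>W n. k \<in> range p)" unfolding W_def by blast
    also have "\<dots> \<longleftrightarrow> n \<in> pjump a x" unfolding assms pjump_def Nbase_def by blast
    finally show ?thesis .
  qed
  have "comp (chi (fjump p)) (compile_expr (Orc (Smn code_name_search Arg))) n (chi (pjump a x) n)"
    for n
    unfolding comp_compile_expr_iff by (simp only: eval_expr.simps eval_Smn key chi_def)
  then show ?thesis unfolding turing_le_def by blast
qed

definition radius_gap :: "nat \<Rightarrow> nat \<Rightarrow> nat" where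
  "radius_gap r r' = Suc (fst (dec r')) * Suc (snd (dec r)) - Suc (fst (dec r)) * Suc
      (snd (dec r'))"
definition radius_diff :: "nat \<Rightarrow> nat \<Rightarrow> nat" where
  "radius_diff r r' = enc (radius_gap r r' - 1, Suc (snd (dec r')) * Suc (snd (dec r)) - 1)"

lemma q_Suc: "q r = real (Suc (fst (dec r))) / real (Suc (snd (dec r)))"
  by (simp add: q_def)

lemma q_pos: "0 < q r" by (simp add: q_def)

lemma radius_gap_pos_iff: "0 < radius_gap r r' \<longleftrightarrow> q r < q r'"
proof -
  obtain m k where r: "dec r = (m, k)" by (cases "dec r")
  obtain m' k' where r': "dec r' = (m', k')" by (cases "dec r'")
  have "q r < q r' \<longleftrightarrow> real (Suc m) / real (Suc k) < real (Suc m') / real (Suc k')"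
    by (simp add: q_Suc r r')
  also have "\<dots> \<longleftrightarrow> real (Suc m) * real (Suc k') < real (Suc m') * real (Suc k)"
    by (simp add: divide_less_eq less_divide_eq field_simps del: of_nat_Suc)
  also have "\<dots> \<longleftrightarrow> Suc m * Suc k' < Suc m' * Suc k"
    by (simp only: of_nat_mult[symmetric] of_nat_less_iff)
  finally show ?thesis by (simp add: radius_gap_def r r')
qed

lemma q_radius_diff: assumes "0 < radius_gap r r'" shows "q (radius_diff r r') = q r' - q r"
proof -
  obtain m k where r: "dec r = (m, k)" by (cases "dec r")
  obtain m' k' where r': "dec r' = (m', k')" by (cases "dec r'")
  have D: "Suc m * Suc k' < Suc m' * Suc k" using assms by (simp add: radius_gap_def r r')
  have "q (radius_diff r r') = real (Suc m' * Suc k - Suc m * Suc k') / real (Suc k' * Suc k)"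
    using assms by (simp add: q_Suc radius_diff_def radius_gap_def r r' del: mult_Suc
      mult_Suc_right)
  also have "\<dots> = (real (Suc m') * real (Suc k) - real (Suc m) * real (Suc k')) /
    (real (Suc k') * real (Suc k))"
    using D by (simp add: of_nat_diff less_imp_le del: of_nat_Suc mult_Suc mult_Suc_right)
  also have "\<dots> = q r' - q r" by (simp add: q_Suc r r' field_simps del: of_nat_Suc)
  finally show ?thesis .
qed

definition "RadiusGapX r r' = Sub (Mul (Sc (Fst r')) (Sc (Snd r))) (Mul (Sc (Fst r)) (Sc (Snd r')))"
definition "RadiusDiffX r r' = Pair (Pr (RadiusGapX r r')) (Pr (Mul (Sc (Snd r')) (Sc (Snd r))))"
lemma eval_RadiusGapX [simp]: "eval_expr orc (RadiusGapX r r') z =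
    radius_gap (eval_expr orc r z) (eval_expr orc r' z)" by
    (simp add: RadiusGapX_def radius_gap_def)
lemma eval_RadiusDiffX [simp]: "eval_expr orc (RadiusDiffX r r') z =
    radius_diff (eval_expr orc r z) (eval_expr orc r' z)" by
    (simp add: RadiusDiffX_def radius_diff_def)

definition inclusion_code :: "nat \<Rightarrow> nat \<Rightarrow> nat" where
  "inclusion_code b k = enc (fst (dec k), enc
      (fst (dec b), radius_diff (snd (dec b)) (snd (dec k))))"

definition "InclusionX cl = (let b = Fst (Fst Arg); L' = Snd (Fst Arg); k = Fst (Snd Arg) in
  And (Lt (Cst 0) (RadiusGapX (Snd b) (Snd k)))
      (Claimed (ClaimX (Cst 0) (Cst cl) (Pair (Fst k) (Pair (Fst b) (RadiusDiffX (Snd b) (Snd k))))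
        (Cst 1)) L'))"

lemma eval_InclusionX: "eval_expr orc (InclusionX cl) (enc (enc (b, L'), enc (k, rest))) =
  of_bool (0 < radius_gap (snd (dec b)) (snd (dec k)) \<and>
    claimed (claim 0 cl (inclusion_code b k) 1) (list_decode L'))"
  by (simp add: InclusionX_def inclusion_code_def Let_def)

lemma all_suffixes_const: "all_suffixes (\<lambda>h t. P h) xs \<longleftrightarrow> (\<forall>h\<in>set xs. P h)"
  by (induction xs) auto

text \<open>Search condition on \<open>enc (enc (enc (sc, s), b), t)\<close>: \<open>t\<close> codes \<open>(dl, y, L, L')\<close> where \<open>L\<close>
  derives that \<open>s\<close> halts on \<open>s\<close> with table \<open>sc @ dl\<close>, and \<open>L'\<close> derives, by running \<open>cl\<close>,
  that every entry of \<open>sc @ dl\<close> formally contains the ball \<open>b\<close>.\<close>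

definition "ForcingX cl = (let P = Fst (Fst Arg); sc = Fst P; s = Snd P; b = Snd (Fst Arg); t = Snd Arg;
  dl = Fst t; y = Fst (Snd t); L = Fst (Snd (Snd t)); L' = Snd (Snd (Snd t)); tau = App sc dl in
  Not1 (And (HaltsX (Sc tau) s s y L)
    (And (DerivationX (Cst 0) L') (AllSuffixes (InclusionX cl) (Pair b L') tau))))"

definition "code_forcing cl = code_mu (compile_expr (ForcingX cl))"

lemma W_code_forcing: "b \<in> W (smn (code_forcing cl) (enc (sc, s))) \<longleftrightarrow>
  (\<exists>dl y L L'. derivation (table_oracle (Suc (list_encode (list_decode sc @ dl)))) L \<and>
    claimed (claim 0 s s y) L \<and> derivation (table_oracle 0) L' \<and>
     (\<forall>k\<in>set (list_decode sc @ dl). 0 < radius_gap (snd (dec b)) (snd (dec k)) \<and>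
       claimed (claim 0 cl (inclusion_code b k) 1) L'))"
proof -
  have "b \<in> W (smn (code_forcing cl) (enc (sc, s))) \<longleftrightarrow>
    (\<exists>r. comp (\<lambda>_. 0) (code_forcing cl) (enc (enc (sc, s), b)) r)"
    unfolding W_def using comp_smn_iff by blast
  also have "\<dots> \<longleftrightarrow> (\<exists>t. eval_expr (\<lambda>_. 0) (ForcingX cl) (enc (enc (enc (sc, s), b), t)) = 0)"
    unfolding code_forcing_def by (rule halts_code_mu_iff[OF computes_compile_expr])
  also have "\<dots> \<longleftrightarrow> (\<exists>dl y L L'. derivation (table_oracle (Suc (list_encode (list_decode sc @ dl))))
    L \<and> claimed (claim 0 s s y) L \<and> derivation (table_oracle 0) L' \<and>
     (\<forall>k\<in>set (list_decode sc @ dl). 0 < radius_gap (snd (dec b)) (snd (dec k)) \<and>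
       claimed (claim 0 cl (inclusion_code b k) 1) L'))" (is "?A \<longleftrightarrow> ?B")
  proof
    assume ?A
    then obtain t where t: "eval_expr (\<lambda>_. 0) (ForcingX cl) (enc (enc (enc (sc, s), b), t)) = 0"
      by blast
    show ?B
      by (rule exI[of _ "list_decode (fst (dec t))"], rule exI[of _ "fst (dec (snd (dec t)))"],
          rule exI[of _ "list_decode (fst (dec (snd (dec (snd (dec t))))))"], rule exI[of _
            "list_decode (snd (dec (snd (dec (snd (dec t))))))"])
        (use t in \<open>simp add: ForcingX_def Let_def eval_InclusionX all_suffixes_const\<close>)
  next
    assume ?B
    then obtain dl y L L' where h: "derivation
      (table_oracle (Suc (list_encode (list_decode sc @ dl)))) L" "claimed (claim 0 s s y) L"
      "derivation (table_oracle 0) L'"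
     "\<forall>k\<in>set (list_decode sc @ dl). 0 < radius_gap (snd (dec b)) (snd (dec k)) \<and>
         claimed (claim 0 cl (inclusion_code b k) 1) L'" by blast
    show ?A
      by (rule exI[of _ "enc (list_encode dl, enc (y, enc (list_encode L, list_encode L')))"])
        (use h in \<open>simp add: ForcingX_def Let_def eval_InclusionX all_suffixes_const\<close>)
  qed
  finally show ?thesis .
qed

section \<open>Forcing the jump by extensions inside a neighbourhood base\<close>

locale presented_point =
  fixes a :: "nat \<Rightarrow> 'a::metric_space" and x :: 'a and cl :: nat
  assumes dense: "closure (range a) = UNIV"
    and cl_decides_less: "\<And>n. comp (\<lambda>_. 0) cl n
        (chi {prod_encode (i, prod_encode (j, r)) | i j r. dist (a i) (a j) < q r} n)"
begin

text \<open>Formal inclusion of \<open>B\<^sub>b\<close> in \<open>B\<^sub>k\<close>: \<open>d(a\<^sub>k, a\<^sub>b) + q\<^sub>b < q\<^sub>k\<close>, with the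
  difference of radii computed exactly.  Since \<open>cl\<close> decides \<open>d(a\<^sub>i, a\<^sub>j) < q\<^sub>r\<close>, it is decidable.\<close>

definition ball_inside :: "nat \<Rightarrow> nat \<Rightarrow> bool" where
  "ball_inside b k \<longleftrightarrow> 0 < radius_gap (snd (dec b)) (snd (dec k)) \<and>
     dist (a (fst (dec k))) (a (fst (dec b))) < q (radius_diff (snd (dec b)) (snd (dec k)))"

lemma comp_less_code_iff: "comp (\<lambda>_. 0) cl (inclusion_code b k) 1 \<longleftrightarrow>
    dist (a (fst (dec k))) (a (fst (dec b))) < q (radius_diff (snd (dec b)) (snd (dec k)))"
proof -
  let ?LT = "{prod_encode (i, prod_encode (j, r)) | i j r. dist (a i) (a j) < q r}"
  have "comp (\<lambda>_. 0) cl (inclusion_code b k) 1 \<longleftrightarrow> chi ?LT (inclusion_code b k) = 1"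
  proof
    assume "comp (\<lambda>_. 0) cl (inclusion_code b k) 1"
    from comp_deterministic[OF cl_decides_less this] show "chi ?LT (inclusion_code b k) = 1" by simp
  next
    assume "chi ?LT (inclusion_code b k) = 1"
    then show "comp (\<lambda>_. 0) cl (inclusion_code b k) 1"
      using cl_decides_less[of "inclusion_code b k"] by simp
  qed
  also have "\<dots> \<longleftrightarrow> inclusion_code b k \<in> ?LT" by (simp add: chi_def)
  also have "\<dots> \<longleftrightarrow> dist (a (fst (dec k))) (a (fst (dec b))) < q
    (radius_diff (snd (dec b)) (snd (dec k)))"
  proof
    assume "inclusion_code b k \<in> ?LT"
    then obtain i j r where e: "inclusion_code b k =
      prod_encode (i, prod_encode (j, r))" "dist (a i) (a j) < q r" by blast
    from e(1) have "i = fst (dec k)" "j = fst (dec b)" "r = radius_diff (snd (dec b)) (snd (dec k))"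
      unfolding inclusion_code_def by (metis prod_encode_inverse prod.inject)+
    then show "dist (a (fst (dec k))) (a (fst (dec b))) < q
      (radius_diff (snd (dec b)) (snd (dec k)))" using e(2) by simp
  next
    assume "dist (a (fst (dec k))) (a (fst (dec b))) < q (radius_diff (snd (dec b)) (snd (dec k)))"
    then show "inclusion_code b k \<in> ?LT" unfolding inclusion_code_def by blast
  qed
  finally show ?thesis .
qed

lemma inclusion_derivations_iff: "(\<exists>L'. derivation (table_oracle 0) L' \<and>
    (\<forall>k\<in>set tau. 0 < radius_gap (snd (dec b)) (snd (dec k)) \<and>
    claimed (claim 0 cl (inclusion_code b k) 1) L'))
   \<longleftrightarrow> (\<forall>k\<in>set tau. ball_inside b k)"
proof
  assume "\<exists>L'. derivation (table_oracle 0) L' \<and>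
    (\<forall>k\<in>set tau. 0 < radius_gap (snd (dec b)) (snd (dec k)) \<and>
    claimed (claim 0 cl (inclusion_code b k) 1) L')"
  then obtain L' where L': "derivation (table_oracle 0) L'" "\<forall>k\<in>set tau. 0 < radius_gap
    (snd (dec b)) (snd (dec k)) \<and> claimed (claim 0 cl (inclusion_code b k) 1) L'" by blast
  have "comp (\<lambda>_. 0) cl (inclusion_code b k) 1" if "k \<in> set tau" for k
    using derivation_comp[OF L'(1)] L'(2) that by (simp add: table_oracle_0)
  then show "\<forall>k\<in>set tau. ball_inside b k" using L'(2) comp_less_code_iff unfolding ball_inside_def
    by blast
next
  assume h: "\<forall>k\<in>set tau. ball_inside b k"
  then show "\<exists>L'. derivation (table_oracle 0) L' \<and>
    (\<forall>k\<in>set tau. 0 < radius_gap (snd (dec b)) (snd (dec k)) \<and>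
    claimed (claim 0 cl (inclusion_code b k) 1) L')"
  proof (induction tau)
    case Nil then show ?case by (intro exI[of _ "[]"]) simp
  next
    case (Cons k tau)
    then obtain L1 where L1: "derivation (table_oracle 0) L1" "\<forall>k\<in>set tau. 0 < radius_gap
      (snd (dec b)) (snd (dec k)) \<and> claimed (claim 0 cl (inclusion_code b k) 1) L1" by auto
    have "comp (\<lambda>_. 0) cl (inclusion_code b k) 1" using Cons.prems comp_less_code_iff
      unfolding ball_inside_def by auto
    then obtain L2 where L2': "derivation (\<lambda>a b. b = (\<lambda>_. 0) a) L2" "claimed
      (claim 0 cl (inclusion_code b k) 1) L2"
      using comp_derivation by blast
    then have L2: "derivation (table_oracle 0) L2" "claimed (claim 0 cl (inclusion_code b k) 1) L2"
      by (simp_all add: table_oracle_0)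
    show ?case using L1 L2 Cons.prems unfolding ball_inside_def
      by (intro exI[of _ "L1 @ L2"]) (auto intro: derivation_append claimed_append)
  qed
qed

definition "forcing_index sc s = smn (code_forcing cl) (enc (sc, s))"

lemma W_forcing_index: "b \<in> W (forcing_index sc s) \<longleftrightarrow>
   (\<exists>dl. self_halts_on_table (list_decode sc @ dl) s \<and>
     (\<forall>k\<in>set (list_decode sc @ dl). ball_inside b k))"
  unfolding forcing_index_def W_code_forcing self_halts_on_table_def
  using inclusion_derivations_iff by blast

lemma dense_approx: "\<exists>j. dist (a j) x < e" if "0 < e"
  using dense closure_approachable[of x "range a"] that by auto

lemma exists_ball_inside_iff: "(\<exists>b. x \<in> ball_code a b \<and> (\<forall>k\<in>set tau. ball_inside b k)) \<longleftrightarrow>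
    set tau \<subseteq> Nbase a x"
proof
  assume "\<exists>b. x \<in> ball_code a b \<and> (\<forall>k\<in>set tau. ball_inside b k)"
  then obtain b where b: "x \<in> ball_code a b" "\<forall>k\<in>set tau. ball_inside b k" by blast
  show "set tau \<subseteq> Nbase a x"
  proof
    fix k assume k: "k \<in> set tau"
    let ?i = "fst (dec k)" and ?r' = "snd (dec k)" and ?j = "fst (dec b)" and ?r = "snd (dec b)"
    have "dist (a ?j) x < q ?r" using b(1) by (simp add: ball_code_def dist_commute)
    moreover have "dist (a ?i) (a ?j) < q ?r' - q ?r" using b(2) k q_radius_diff
      unfolding ball_inside_def by auto
    moreover have "dist (a ?i) x \<le> dist (a ?i) (a ?j) + dist (a ?j) x" by (rule dist_triangle)
    ultimately have "dist (a ?i) x < q ?r'" by linarith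
    then show "k \<in> Nbase a x" by (simp add: Nbase_def ball_code_def)
  qed
next
  assume sub: "set tau \<subseteq> Nbase a x"
  define sl where "sl k = q (snd (dec k)) - dist (a (fst (dec k))) x" for k
  have slpos: "0 < sl k" if "k \<in> set tau" for k
    using sub that by (auto simp: sl_def Nbase_def ball_code_def)
  define eps where "eps = (if tau = [] then 1 else Min (sl ` set tau))"
  have eps: "0 < eps" using slpos by (auto simp: eps_def)
  have eps_le: "eps \<le> sl k" if "k \<in> set tau" for k using that by (auto simp: eps_def)
  obtain n where n: "inverse (real (Suc n)) < eps / 3" using reals_Archimedean[of "eps / 3"] eps
    by auto
  define r where "r = enc (0, n)"
  have qr: "q r = inverse (real (Suc n))" by (simp add: r_def q_def divide_inverse)
  obtain j where j: "dist (a j) x < q r" using dense_approx q_pos by blast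
  define b where "b = enc (j, r)"
  have "x \<in> ball_code a b" using j by (simp add: b_def ball_code_def dist_commute)
  moreover have "ball_inside b k" if k: "k \<in> set tau" for k
  proof -
    let ?i = "fst (dec k)" and ?r' = "snd (dec k)"
    have s: "eps \<le> q ?r' - dist (a ?i) x" using eps_le[OF k] by (simp add: sl_def)
    have "q r < eps / 3" using qr n by simp
    then have D: "q r < q ?r'" using s eps zero_le_dist[of "a ?i" x] by linarith
    then have D': "0 < radius_gap r ?r'" using radius_gap_pos_iff by blast
    have "dist (a ?i) (a j) \<le> dist (a ?i) x + dist x (a j)" by (rule dist_triangle)
    also have "\<dots> < q ?r' - q r" using s j \<open>q r < eps / 3\<close> q_pos[of r] by (simp add: dist_commute)
    finally show ?thesis unfolding ball_inside_def b_def using D' q_radius_diff[OF D'] by simp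
  qed
  ultimately show "\<exists>b. x \<in> ball_code a b \<and> (\<forall>k\<in>set tau. ball_inside b k)" by blast
qed

lemma forcing_index_in_pjump_iff: "forcing_index sc s \<in> pjump a x \<longleftrightarrow>
   (\<exists>dl. self_halts_on_table (list_decode sc @ dl) s \<and> set (list_decode sc @ dl) \<subseteq> Nbase a x)"
proof -
  have "forcing_index sc s \<in> pjump a x \<longleftrightarrow> (\<exists>b dl. x \<in> ball_code a b \<and>
      self_halts_on_table (list_decode sc @ dl) s \<and>
        (\<forall>k\<in>set (list_decode sc @ dl). ball_inside b k))"
    unfolding pjump_def mem_Collect_eq UN_iff Bex_def W_forcing_index by blast
  also have "\<dots> \<longleftrightarrow> (\<exists>dl. self_halts_on_table (list_decode sc @ dl) s \<and>
    set (list_decode sc @ dl) \<subseteq> Nbase a x)"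
    using exists_ball_inside_iff by blast
  finally show ?thesis .
qed

end

section \<open>The construction of the name\<close>

definition "code_singleton = code_mu (compile_expr (Not1 (Eq (Fst (Fst Arg)) (Snd (Fst Arg)))))"
definition "SingletonX e = Smn code_singleton e"
lemma eval_SingletonX [simp]: "eval_expr orc (SingletonX e) z =
    smn code_singleton (eval_expr orc e z)"
  by (simp add: SingletonX_def)

lemma W_singleton: "W (smn code_singleton k) = {k}"
proof -
  have "b \<in> W (smn code_singleton k) \<longleftrightarrow> (\<exists>r. comp (\<lambda>_. 0) code_singleton (enc (k, b)) r)" for b
    unfolding W_def using comp_smn_iff by blast
  also have "\<dots> b \<longleftrightarrow> (\<exists>t. eval_expr (\<lambda>_. 0) (Not1 (Eq (Fst (Fst Arg)) (Snd (Fst Arg))))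
    (enc (enc (k, b), t)) = 0)" for b
    unfolding code_singleton_def by (rule halts_code_mu_iff[OF computes_compile_expr])
  finally show ?thesis by auto
qed

definition "ForcingIndexX cl sc s = Smn (code_forcing cl) (Pair sc s)"
lemma eval_ForcingIndexX [simp]: "eval_expr orc (ForcingIndexX cl sc s) z =
    smn (code_forcing cl) (enc (eval_expr orc sc z, eval_expr orc s z))"
  by (simp add: ForcingIndexX_def)

text \<open>On input \<open>enc (enc (u, enc (s, sc)), t)\<close> with oracle \<open>x'\<close>: if the forcing index of
  \<open>(sc, s)\<close> is not in \<open>x'\<close>, accept at once; otherwise accept \<open>t = enc (dl, enc (y, L))\<close> if
  \<open>L\<close> derives that \<open>s\<close> halts on \<open>s\<close> with table \<open>sc @ dl\<close> and all entries of \<open>sc @ dl\<close>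
  are neighbourhoods of \<open>x\<close>.  Such \<open>t\<close> exists by the choice of the forcing index.\<close>

definition "SearchX cl = (let s = Fst (Snd (Fst Arg)); sc = Snd (Snd (Fst Arg)); t = Snd Arg;
  dl = Fst t; y = Fst (Snd t); L = Snd (Snd t); tau = App sc dl in
  Ifz (Orc (ForcingIndexX cl sc s)) (Cst 0)
    (Not1 (And (HaltsX (Sc tau) s s y L)
      (AllSuffixes (Eq (Orc (SingletonX (Fst (Snd Arg)))) (Cst 1)) (Cst 0) tau))))"

definition "ExtendX cl k0 = (let s = Fst (Snd (Fst Arg)); sc = Snd (Snd (Fst Arg)); m = Snd Arg;
  sc' = Ifz (Orc (ForcingIndexX cl sc s)) sc (App sc (Fst m)) in
  App sc' (CCons (Ifz (Orc (SingletonX s)) (Cst k0) s) (Cst 0)))"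

definition "code_next_stage cl k0 =
    code_comp (compile_expr (ExtendX cl k0))
    (code_pair code_id (code_mu (compile_expr (SearchX cl))))"
definition "code_stage cl k0 = code_rec code_zero (code_next_stage cl k0)"
definition "code_forced_jump cl k0 =
    code_comp (compile_expr (Orc (ForcingIndexX cl (Fst Arg) (Snd Arg))))
    (code_pair (code_comp (code_stage cl k0) (code_pair code_zero code_id)) code_id)"

context presented_point
begin

abbreviation "jump_oracle \<equiv> chi (pjump a x)"

lemma singleton_in_pjump_iff: "smn code_singleton k \<in> pjump a x \<longleftrightarrow> k \<in> Nbase a x"
  unfolding pjump_def by (simp add: W_singleton Nbase_def)

definition "next_stage k0 v = eval_expr jump_oracle (ExtendX cl k0)
    (enc (v, LEAST t. eval_expr jump_oracle (SearchX cl) (enc (v, t)) = 0))"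

lemma search_terminates: "\<exists>t. eval_expr jump_oracle (SearchX cl) (enc (v, t)) = 0"
proof -
  obtain u s sc where v: "v = enc (u, enc (s, sc))" by (metis prod_decode_inverse prod.collapse)
  show ?thesis
  proof (cases "forcing_index sc s \<in> pjump a x")
    case False
    then show ?thesis unfolding v SearchX_def Let_def by (simp add: chi_def forcing_index_def)
  next
    case True
    then obtain dl y L
      where h: "derivation (table_oracle (Suc (list_encode (list_decode sc @ dl)))) L"
        "claimed (claim 0 s s y) L" "set (list_decode sc @ dl) \<subseteq> Nbase a x"
      unfolding forcing_index_in_pjump_iff self_halts_on_table_def by blast
    have "\<forall>k\<in>set (list_decode sc @ dl). chi (pjump a x) (smn code_singleton k) = 1"
      using h(3) singleton_in_pjump_iff by (auto simp: chi_def)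
    then show ?thesis unfolding v SearchX_def Let_def using True h
      by (intro exI[of _ "enc (list_encode dl, enc (y, list_encode L))"])
        (simp add: chi_def forcing_index_def all_suffixes_const)
  qed
qed

lemma computes_next_stage: "computes jump_oracle (code_next_stage cl k0) (next_stage k0)"
  unfolding code_next_stage_def next_stage_def
  by (rule computes_cong,
      (rule computes_intros computes_compile_expr | rule computes_mu[OF computes_compile_expr search_terminates])+)
    simp

definition "stage k0 n = prim_rec (\<lambda>_. 0) (next_stage k0) 0 n"

lemma computes_stage: "computes jump_oracle (code_stage cl k0)
    (\<lambda>w. prim_rec (\<lambda>_. 0) (next_stage k0) (fst (dec w)) (snd (dec w)))"
  unfolding code_stage_def by (rule computes_intros computes_next_stage)+

lemma computes_forced_jump: "computes jump_oracle (code_forced_jump cl k0)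
    (\<lambda>e. jump_oracle (forcing_index (stage k0 e) e))"
  unfolding code_forced_jump_def
  by (rule computes_cong, (rule computes_intros computes_compile_expr computes_id computes_stage)+)
    (simp add: stage_def forcing_index_def)

definition "next_entry k0 s = (if s \<in> Nbase a x then s else k0)"

lemma jump_oracle_singleton: "jump_oracle (smn code_singleton s) = (if s \<in> Nbase a x then 1 else 0)"
  using singleton_in_pjump_iff by (simp add: chi_def)

lemma eval_ExtendX: "eval_expr jump_oracle (ExtendX cl k0) (enc (enc (u, enc (s, sc)), m)) =
   list_encode ((if forcing_index sc s \<in> pjump a x then list_decode sc @ list_decode (fst (dec m))
     else list_decode sc) @ [next_entry k0 s])"
proof -
  have h1: "jump_oracle (smn (code_forcing cl) (enc (sc, s))) =
    (if forcing_index sc s \<in> pjump a x then 1 else 0)"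
    by (simp add: forcing_index_def chi_def)
  show ?thesis unfolding ExtendX_def Let_def
    by (simp only: eval_expr.simps eval_App eval_CCons eval_ForcingIndexX eval_SingletonX
      prod_encode_inverse fst_conv snd_conv h1 jump_oracle_singleton)
      (simp add: next_entry_def)
qed

lemma next_stage_eq: "next_stage k0 (enc (u, enc (s, sc))) =
    list_encode ((if forcing_index sc s \<in> pjump a x
      then list_decode sc @
        list_decode (fst (dec (LEAST t. eval_expr jump_oracle (SearchX cl) (enc (enc (u, enc (s, sc)), t)) = 0)))
      else list_decode sc) @ [next_entry k0 s])"
  unfolding next_stage_def by (rule eval_ExtendX)

lemma next_stage_unforced: "forcing_index sc s \<notin> pjump a x \<Longrightarrow> next_stage k0 (enc (u, enc (s, sc))) =
    list_encode (list_decode sc @ [next_entry k0 s])"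
  unfolding next_stage_eq by (simp only: if_False)

lemma next_stage_forced:
  assumes "forcing_index sc s \<in> pjump a x"
  shows "\<exists>dl. next_stage k0 (enc (u, enc (s, sc))) =
      list_encode ((list_decode sc @ dl) @ [next_entry k0 s]) \<and>
     self_halts_on_table (list_decode sc @ dl) s \<and> set dl \<subseteq> Nbase a x"
proof -
  let ?v = "enc (u, enc (s, sc))"
  define t0 where "t0 = (LEAST t. eval_expr jump_oracle (SearchX cl) (enc (?v, t)) = 0)"
  have "eval_expr jump_oracle (SearchX cl) (enc (?v, t0)) = 0" unfolding t0_def
    using search_terminates by (rule LeastI_ex)
  then have h:
      "derivation (table_oracle (Suc (list_encode (list_decode sc @ list_decode (fst (dec t0))))))
        (list_decode (snd (dec (snd (dec t0)))))"
      "claimed (claim 0 s s (fst (dec (snd (dec t0))))) (list_decode (snd (dec (snd (dec t0)))))"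
      "\<forall>k\<in>set (list_decode sc @ list_decode (fst (dec t0))). jump_oracle (smn code_singleton k) = 1"
    using assms unfolding SearchX_def Let_def
    by (simp_all add: chi_def forcing_index_def all_suffixes_const)
  have "set (list_decode (fst (dec t0))) \<subseteq> Nbase a x"
    using h(3) by (auto simp: jump_oracle_singleton split: if_splits)
  moreover have "next_stage k0 ?v =
    list_encode ((list_decode sc @ list_decode (fst (dec t0))) @ [next_entry k0 s])"
    using assms unfolding next_stage_eq t0_def by (simp only: if_True)
  ultimately show ?thesis using h(1,2) unfolding self_halts_on_table_def by blast
qed

context
  fixes k0 assumes k0: "k0 \<in> Nbase a x"
begin

definition "stage_list n = list_decode (stage k0 n)"

lemma stage_Suc: "stage k0 (Suc n) = next_stage k0 (enc (0, enc (n, stage k0 n)))"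
  by (simp add: stage_def)

lemma next_entry_in_Nbase: "next_entry k0 n \<in> Nbase a x" using k0 by (simp add: next_entry_def)

lemma stage_list_Suc: "\<exists>dl. stage_list (Suc n) = (stage_list n @ dl) @ [next_entry k0 n] \<and>
    set dl \<subseteq> Nbase a x \<and>
    (forcing_index (stage k0 n) n \<in> pjump a x \<longrightarrow> self_halts_on_table (stage_list n @ dl) n)"
proof (cases "forcing_index (stage k0 n) n \<in> pjump a x")
  case False
  then show ?thesis unfolding stage_list_def stage_Suc using next_stage_unforced[OF False]
    by (intro exI[of _ "[]"]) simp
next
  case True
  obtain dl where
    "next_stage k0 (enc (0, enc (n, stage k0 n))) =
        list_encode ((list_decode (stage k0 n) @ dl) @ [next_entry k0 n])"
    "self_halts_on_table (list_decode (stage k0 n) @ dl) n" "set dl \<subseteq> Nbase a x"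
    using next_stage_forced[OF True] by blast
  then show ?thesis unfolding stage_list_def stage_Suc by (intro exI[of _ dl]) auto
qed

lemma stage_list_subset_Nbase: "set (stage_list n) \<subseteq> Nbase a x"
proof (induction n)
  case 0 then show ?case by (simp add: stage_list_def stage_def)
next
  case (Suc n) then show ?case using stage_list_Suc[of n] next_entry_in_Nbase by auto
qed

lemma length_stage_list: "n \<le> length (stage_list n)"
proof (induction n)
  case (Suc n) then show ?case using stage_list_Suc[of n] by auto
qed simp

lemma stage_list_prefix: "m \<le> n \<Longrightarrow> \<exists>ys. stage_list n = stage_list m @ ys"
proof (induction n rule: dec_induct)
  case (step n) then show ?case using stage_list_Suc[of n] by fastforce
qed simp

definition "forced_name i = stage_list (Suc i) ! i"

lemma forced_name_eq_nth: "i < length (stage_list n) \<Longrightarrow> forced_name i = stage_list n ! i"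
proof (cases "n \<le> Suc i")
  case True
  assume i: "i < length (stage_list n)"
  obtain ys where "stage_list (Suc i) = stage_list n @ ys" using stage_list_prefix[OF True] by blast
  then show ?thesis using i by (simp add: forced_name_def nth_append)
next
  case False
  then have "Suc i \<le> n" by simp
  then obtain ys where "stage_list n = stage_list (Suc i) @ ys" using stage_list_prefix by blast
  moreover have "i < length (stage_list (Suc i))" using length_stage_list[of "Suc i"] by simp
  ultimately show ?thesis by (simp add: forced_name_def nth_append)
qed

lemma range_forced_name: "range forced_name = Nbase a x"
proof
  show "range forced_name \<subseteq> Nbase a x"
  proof
    fix k assume "k \<in> range forced_name"
    then obtain i where "k = forced_name i" by blast
    moreover have "i < length (stage_list (Suc i))" using length_stage_list[of "Suc i"] by simp
    ultimately show "k \<in> Nbase a x" using stage_list_subset_Nbase[of "Suc i"] nth_mem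
      by (fastforce simp: forced_name_def)
  qed
next
  show "Nbase a x \<subseteq> range forced_name"
  proof
    fix k assume k: "k \<in> Nbase a x"
    obtain dl where "stage_list (Suc k) = (stage_list k @ dl) @ [next_entry k0 k]"
      using stage_list_Suc[of k] by blast
    then have e: "stage_list (Suc k) = (stage_list k @ dl) @ [k]" using k
      by (simp add: next_entry_def)
    have "forced_name (length (stage_list k @ dl)) =
      stage_list (Suc k) ! length (stage_list k @ dl)" by (rule forced_name_eq_nth) (simp add: e)
    also have "\<dots> = k" by (simp add: e)
    finally show "k \<in> range forced_name" by (metis rangeI)
  qed
qed

lemma fjump_forced_name_iff: "e \<in> fjump forced_name \<longleftrightarrow> forcing_index (stage k0 e) e \<in> pjump a x"
proof
  assume "forcing_index (stage k0 e) e \<in> pjump a x"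
  then obtain dl y L where h: "stage_list (Suc e) = (stage_list e @ dl) @ [next_entry k0 e]"
    "derivation (table_oracle (Suc (list_encode (stage_list e @ dl)))) L" "claimed (claim 0 e e y) L"
    using stage_list_Suc[of e] unfolding self_halts_on_table_def by blast
  have "(stage_list e @ dl) ! i = forced_name i" if "i < length (stage_list e @ dl)" for i
    using that forced_name_eq_nth[of i "Suc e"] h(1) by (auto simp: nth_append)
  then have "comp forced_name e e y" using comp_of_table_prefix h(2,3) by blast
  then show "e \<in> fjump forced_name" by (auto simp: fjump_def)
next
  assume "e \<in> fjump forced_name"
  then obtain y where "comp forced_name e e y" by (auto simp: fjump_def)
  then obtain N L where N: "length (stage_list e) \<le> N"
    and L: "derivation (table_oracle (Suc (list_encode (map forced_name [0..<N])))) L"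
      "claimed (claim 0 e e y) L"
    by (rule comp_use_principle)
  define dl where "dl = drop (length (stage_list e)) (map forced_name [0..<N])"
  have "take (length (stage_list e)) (map forced_name [0..<N]) = stage_list e"
    using N by (intro nth_equalityI) (auto simp: forced_name_eq_nth)
  then have \<tau>: "stage_list e @ dl = map forced_name [0..<N]" unfolding dl_def
    by (metis append_take_drop_id)
  have "set (stage_list e @ dl) \<subseteq> Nbase a x" unfolding \<tau> using range_forced_name by auto
  then show "forcing_index (stage k0 e) e \<in> pjump a x"
    unfolding forcing_index_in_pjump_iff self_halts_on_table_def using L \<tau> by (metis stage_list_def)
qed

lemma fjump_forced_name_le_pjump: "turing_le (fjump forced_name) (pjump a x)"
proof -
  have "comp jump_oracle (code_forced_jump cl k0) e (chi (fjump forced_name) e)" for e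
    using computes_forced_jump[of k0] unfolding computes_def by (simp add: chi_def fjump_forced_name_iff)
  then show ?thesis unfolding turing_le_def by blast
qed

lemma forced_name_jump: "is_name a forced_name x \<and> turing_equiv (pjump a x) (fjump forced_name)"
  using pjump_le_fjump_name[OF range_forced_name] fjump_forced_name_le_pjump range_forced_name
  by (simp add: is_name_def turing_equiv_def)

end

end

lemma presented_point_exists:
  assumes "rec_presented a"
  shows "\<exists>cl. presented_point a cl"
  using assms unfolding rec_presented_def recursive_set_def presented_point_def by blast

lemma (in presented_point) Nbase_nonempty: "\<exists>k. k \<in> Nbase a x"
proof -
  obtain j where "dist (a j) x < q (enc (0, 0))" using dense_approx q_pos by blast
  then have "enc (j, enc (0, 0)) \<in> Nbase a x" by (simp add: Nbase_def ball_code_def)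
  then show ?thesis ..
qed

theorem lemma2p10:
  fixes a :: "nat \<Rightarrow> 'a::{metric_space, complete_space}"
  assumes "rec_presented a"
  shows "\<forall>x. \<exists>p. is_name a p x \<and> turing_equiv (pjump a x) (fjump p)"
proof
  fix x
  obtain cl where "presented_point a cl" using presented_point_exists[OF assms] by blast
  then interpret presented_point a x cl .
  obtain k0 where "k0 \<in> Nbase a x" using Nbase_nonempty by blast
  then show "\<exists>p. is_name a p x \<and> turing_equiv (pjump a x) (fjump p)"
    using forced_name_jump by blast
qed

end
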